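(* Let $V$ be an $n$-dimensional complex inner product space with orthonormal basis $e_1,\ldots,e_n$, let $m\ge1$, let $\chi$ be an irreducible character of $S_m$, let $1\le k\le m$ and let $A,X^1,\ldots,X^k\in M_n(\mathbb{C})$. Then $$D^k K_{\chi}(A)(X^1,\ldots ,X^k)=\frac{\chi(\mathrm{id})}{(m-k)!}\, B^* \operatorname{miximm}_{\overline{\chi}}(A;X^1,\ldots,X^k)\, B,$$ and, for $\alpha,\beta\in\widehat\Delta$, the $(\alpha,\beta)$ entry of this matrix equals $$\frac{\chi(\mathrm{id})}{m!}\sum_{\gamma ,\delta \in \widehat{\Delta}}b_{\gamma\beta}\, \overline{b_{\delta\alpha}}\sum_{\sigma \in S_k}\sum_{\rho, \tau \in Q_{k,m}}d_{\overline\chi}\Big(X[\delta | \gamma]^{\sigma}_{\tau} [ \rho| \tau]\bigoplus_{\rho| \tau} A[\delta|\gamma](\rho | \tau)\Big).$$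
   Context: Symmetry classes: for $\sigma\in S_m$ let $P(\sigma)$ be the linear operator on $\otimes^m V$ with $P(\sigma)(v_1\otimes\cdots\otimes v_m)=v_{\sigma^{-1}(1)}\otimes\cdots\otimes v_{\sigma^{-1}(m)}$; $K_\chi=\frac{\chi(\mathrm{id})}{m!}\sum_{\sigma\in S_m}\chi(\sigma)P(\sigma)$ and $V_\chi=K_\chi(\otimes^mV)$. $\Gamma_{m,n}$ is the set of maps $\{1,\ldots,m\}\to\{1,\ldots,n\}$ with lexicographic order; $e^*_\alpha=K_\chi(e_{\alpha(1)}\otimes\cdots\otimes e_{\alpha(m)})$. $G_\alpha=\{\sigma\in S_m:\alpha\sigma=\alpha\}$, $\Omega=\{\alpha\in\Gamma_{m,n}:\sum_{\sigma\in G_\alpha}\chi(\sigma)\ne0\}$, $\Delta$ is the set of lexicographically first elements of the orbits $\{\alpha\sigma:\sigma\in S_m\}$, $\overline\Delta=\Delta\cap\Omega$, and $\widehat\Delta$ is a fixed set with $\overline\Delta\subseteq\widehat\Delta\subseteq\Omega$ such that $(e^*_\alpha)_{\alpha\in\widehat\Delta}$ (in lexicographic order) is a basis of $V_\chi$. $(v_\alpha)_{\alpha\in\widehat\Delta}$ is the orthonormal basis of $V_\chi$ obtained from it by Gram–Schmidt, and $B=(b_{\gamma\alpha})_{\gamma,\alpha\in\widehat\Delta}$ is defined by $v_\alpha=\sum_{\gamma\in\widehat\Delta}b_{\gamma\alpha}e^*_\gamma$. For $A\in M_n(\mathbb{C})$ let $T$ be the operator on $V$ with matrix $A$ in $(e_i)$;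 $K_\chi(T)$ is the restriction of $\otimes^mT$ to $V_\chi$, and $K_\chi(A)$ is the matrix indexed by $\widehat\Delta$ whose $(\alpha,\beta)$ entry is $\langle K_\chi(T)v_\beta,v_\alpha\rangle$. $D^kK_\chi(A)(X^1,\ldots,X^k)=\frac{\partial^k}{\partial t_1\cdots\partial t_k}\big|_{0}K_\chi(A+t_1X^1+\cdots+t_kX^k)$ (entrywise). Immanants: for an $m\times m$ matrix $Y$ and a character $\psi$ of $S_m$, $d_\psi(Y)=\sum_{\sigma\in S_m}\psi(\sigma)\prod_i y_{i\sigma(i)}$; $\overline\chi(\sigma)=\overline{\chi(\sigma)}$. The mixed immanant of $m\times m$ matrices $Y^1,\ldots,Y^m$ is $\Delta_\psi(Y^1,\ldots,Y^m)=\frac1{m!}\sum_{\sigma\in S_m}d_\psi$ of the matrix whose $j$-th column is the $j$-th column of $Y^{\sigma(j)}$. For $\gamma,\delta\in\Gamma_{m,n}$ and $Y\in M_n(\mathbb{C})$, $Y[\delta|\gamma]$ is the $m\times m$ matrix with $(i,j)$ entry $y_{\delta(i)\gamma(j)}$. $\operatorname{miximm}_{\overline\chi}(A;X^1,\ldots,X^k)$ is the matrix indexed by $\widehat\Delta$ whose $(\delta,\gamma)$ entry is $\Delta_{\overline\chi}(A[\delta|\gamma],\ldots,A[\delta|\gamma],X^1[\delta|\gamma],\ldots,X^k[\delta|\gamma])$ with $A[\delta|\gamma]$ repeated $m-k$ times. $Q_{k,m}$ is the set of strictly increasing maps $\{1,\ldots,k\}\to\{1,\ldots,m\}$; for $\rho\in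 Q_{k,m}$, $\bar\rho\in Q_{m-k,m}$ has complementary image. $X[\delta|\gamma]^\sigma_\tau$ (for $\sigma\in S_k$, $\tau\in Q_{k,m}$) is the $m\times m$ matrix whose $\tau(p)$-th column is the $\tau(p)$-th column of $X^{\sigma(p)}[\delta|\gamma]$ ($1\le p\le k$), other columns zero. For an $m\times m$ matrix $Y$ and $\rho,\tau\in Q_{k,m}$: $Y[\rho|\tau]$ is the $k\times k$ matrix with entries $y_{\rho(i)\tau(j)}$; $Y(\rho|\tau)$ is the $(m-k)\times(m-k)$ matrix obtained by deleting rows $\rho(\cdot)$ and columns $\tau(\cdot)$. For $P$ ($k\times k$) and $R$ ($(m-k)\times(m-k)$), $P\bigoplus_{\rho|\tau}R=(z_{ij})$ is the $m\times m$ matrix with $z_{ij}=0$ if exactly one of $i\in\operatorname{Im}\rho$, $j\in\operatorname{Im}\tau$ holds, $z_{ij}=p_{\rho^{-1}(i)\tau^{-1}(j)}$ if both hold, and $z_{ij}=r_{\bar\rho^{-1}(i)\bar\tau^{-1}(j)}$ if neither holds. *)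

theory Defs
  imports "HOL-Analysis.Analysis" "HOL-Library.List_Lexorder" "HOL-Combinatorics.Permutations"
begin

(* Conventions: 0-based indices.  V = C^n with standard basis e_0..e_{n-1} and the
   standard inner product (linear in the first argument).
   Gamma_{m,n} = lists of length m with entries < n (alpha(i) = alpha ! i),
   ordered lexicographically (List_Lexorder).
   An element of the tensor power is its coordinate function nat list => complex
   w.r.t. the basis e_alpha (only the values on Gamma_{m,n} matter). *)

definition Gam :: "nat \<Rightarrow> nat \<Rightarrow> nat list set" where
  "Gam m n = {\<alpha>. length \<alpha> = m \<and> set \<alpha> \<subseteq> {0..<n}}"

definition perms :: "nat \<Rightarrow> (nat \<Rightarrow> nat) set" where
  "perms m = {\<sigma>. \<sigma> permutes {0..<m}}"

definition compose_perm :: "nat list \<Rightarrow> (nat \<Rightarrow> nat) \<Rightarrow> nat list" where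
  "compose_perm \<alpha> \<sigma> = map (\<lambda>i. \<alpha> ! \<sigma> i) [0..<length \<alpha>]"

definition mat_mult :: "nat \<Rightarrow> (nat \<Rightarrow> nat \<Rightarrow> complex) \<Rightarrow> (nat \<Rightarrow> nat \<Rightarrow> complex) \<Rightarrow> (nat \<Rightarrow> nat \<Rightarrow> complex)" where
  "mat_mult d M N = (\<lambda>i j. \<Sum>l<d. M i l * N l j)"

definition mat_vec :: "nat \<Rightarrow> (nat \<Rightarrow> nat \<Rightarrow> complex) \<Rightarrow> (nat \<Rightarrow> complex) \<Rightarrow> (nat \<Rightarrow> complex)" where
  "mat_vec d M w = (\<lambda>i. \<Sum>j<d. M i j * w j)"

definition cvecs :: "nat \<Rightarrow> (nat \<Rightarrow> complex) set" where
  "cvecs d = {v. \<forall>i\<ge>d. v i = 0}"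

definition is_rep :: "nat \<Rightarrow> nat \<Rightarrow> ((nat \<Rightarrow> nat) \<Rightarrow> nat \<Rightarrow> nat \<Rightarrow> complex) \<Rightarrow> bool" where
  "is_rep m d \<rho> \<longleftrightarrow>
     (\<forall>\<sigma>\<in>perms m. \<forall>i j. (d \<le> i \<or> d \<le> j) \<longrightarrow> \<rho> \<sigma> i j = 0) \<and>
     \<rho> id = (\<lambda>i j. if i = j \<and> i < d then 1 else 0) \<and>
     (\<forall>\<sigma>\<in>perms m. \<forall>\<tau>\<in>perms m. \<rho> (\<sigma> \<circ> \<tau>) = mat_mult d (\<rho> \<sigma>) (\<rho> \<tau>))"

definition is_subspace :: "nat \<Rightarrow> (nat \<Rightarrow> complex) set \<Rightarrow> bool" where
  "is_subspace d W \<longleftrightarrow> W \<subseteq> cvecs d \<and> (\<lambda>_. 0) \<in> W \<and>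
     (\<forall>v\<in>W. \<forall>w\<in>W. (\<lambda>i. v i + w i) \<in> W) \<and> (\<forall>c. \<forall>v\<in>W. (\<lambda>i. c * v i) \<in> W)"

definition irreducible_rep :: "nat \<Rightarrow> nat \<Rightarrow> ((nat \<Rightarrow> nat) \<Rightarrow> nat \<Rightarrow> nat \<Rightarrow> complex) \<Rightarrow> bool" where
  "irreducible_rep m d \<rho> \<longleftrightarrow> is_rep m d \<rho> \<and> 0 < d \<and>
     (\<forall>W. is_subspace d W \<and> (\<forall>\<sigma>\<in>perms m. \<forall>w\<in>W. mat_vec d (\<rho> \<sigma>) w \<in> W)
          \<longrightarrow> W = {\<lambda>_. 0} \<or> W = cvecs d)"

definition irreducible_character :: "nat \<Rightarrow> ((nat \<Rightarrow> nat) \<Rightarrow> complex) \<Rightarrow> bool" where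
  "irreducible_character m chi \<longleftrightarrow>
     (\<exists>d \<rho>. irreducible_rep m d \<rho> \<and> (\<forall>\<sigma>\<in>perms m. chi \<sigma> = (\<Sum>i<d. \<rho> \<sigma> i i)))"

definition Kchi :: "nat \<Rightarrow> nat \<Rightarrow> ((nat \<Rightarrow> nat) \<Rightarrow> complex) \<Rightarrow> (nat list \<Rightarrow> complex) \<Rightarrow> (nat list \<Rightarrow> complex)" where
  "Kchi m n chi f = (\<lambda>\<beta>. if \<beta> \<in> Gam m n then
      chi id / of_nat (fact m) * (\<Sum>\<sigma>\<in>perms m. chi \<sigma> * f (compose_perm \<beta> \<sigma>)) else 0)"

definition Vchi :: "nat \<Rightarrow> nat \<Rightarrow> ((nat \<Rightarrow> nat) \<Rightarrow> complex) \<Rightarrow> (nat list \<Rightarrow> complex) set" where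
  "Vchi m n chi = range (Kchi m n chi)"

definition evec :: "nat list \<Rightarrow> (nat list \<Rightarrow> complex)" where
  "evec \<alpha> = (\<lambda>\<beta>. if \<beta> = \<alpha> then 1 else 0)"

definition estar :: "nat \<Rightarrow> nat \<Rightarrow> ((nat \<Rightarrow> nat) \<Rightarrow> complex) \<Rightarrow> nat list \<Rightarrow> (nat list \<Rightarrow> complex)" where
  "estar m n chi \<alpha> = Kchi m n chi (evec \<alpha>)"

definition Gstab :: "nat \<Rightarrow> nat list \<Rightarrow> (nat \<Rightarrow> nat) set" where
  "Gstab m \<alpha> = {\<sigma>\<in>perms m. compose_perm \<alpha> \<sigma> = \<alpha>}"

definition Omega :: "nat \<Rightarrow> nat \<Rightarrow> ((nat \<Rightarrow> nat) \<Rightarrow> complex) \<Rightarrow> nat list set" where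
  "Omega m n chi = {\<alpha>\<in>Gam m n. (\<Sum>\<sigma>\<in>Gstab m \<alpha>. chi \<sigma>) \<noteq> 0}"

definition Delta :: "nat \<Rightarrow> nat \<Rightarrow> nat list set" where
  "Delta m n = {\<alpha>\<in>Gam m n. \<forall>\<sigma>\<in>perms m. \<alpha> \<le> compose_perm \<alpha> \<sigma>}"

definition Deltabar :: "nat \<Rightarrow> nat \<Rightarrow> ((nat \<Rightarrow> nat) \<Rightarrow> complex) \<Rightarrow> nat list set" where
  "Deltabar m n chi = Delta m n \<inter> Omega m n chi"

definition estar_basis :: "nat \<Rightarrow> nat \<Rightarrow> ((nat \<Rightarrow> nat) \<Rightarrow> complex) \<Rightarrow> nat list set \<Rightarrow> bool" where
  "estar_basis m n chi D \<longleftrightarrow>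
     (\<forall>c. (\<forall>\<beta>. (\<Sum>\<alpha>\<in>D. c \<alpha> * estar m n chi \<alpha> \<beta>) = 0) \<longrightarrow> (\<forall>\<alpha>\<in>D. c \<alpha> = 0)) \<and>
     (\<forall>f\<in>Vchi m n chi. \<exists>c. f = (\<lambda>\<beta>. \<Sum>\<alpha>\<in>D. c \<alpha> * estar m n chi \<alpha> \<beta>))"

definition tinner :: "nat \<Rightarrow> nat \<Rightarrow> (nat list \<Rightarrow> complex) \<Rightarrow> (nat list \<Rightarrow> complex) \<Rightarrow> complex" where
  "tinner m n f g = (\<Sum>\<beta>\<in>Gam m n. f \<beta> * cnj (g \<beta>))"

definition gs_normalize :: "(('v \<Rightarrow> complex) \<Rightarrow> ('v \<Rightarrow> complex) \<Rightarrow> complex) \<Rightarrow> ('v \<Rightarrow> complex) \<Rightarrow> ('v \<Rightarrow> complex)" where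
  "gs_normalize ip u = (\<lambda>x. u x / complex_of_real (sqrt (Re (ip u u))))"

fun gs_aux :: "(('v \<Rightarrow> complex) \<Rightarrow> ('v \<Rightarrow> complex) \<Rightarrow> complex) \<Rightarrow> ('v \<Rightarrow> complex) list \<Rightarrow> ('v \<Rightarrow> complex) list \<Rightarrow> ('v \<Rightarrow> complex) list" where
  "gs_aux ip acc [] = acc"
| "gs_aux ip acc (w # ws) =
     gs_aux ip (acc @ [gs_normalize ip (\<lambda>x. w x - (\<Sum>u\<leftarrow>acc. ip w u * u x))]) ws"

definition idx :: "'a list \<Rightarrow> 'a \<Rightarrow> nat" where
  "idx xs x = (THE p. p < length xs \<and> xs ! p = x)"

definition onb :: "nat \<Rightarrow> nat \<Rightarrow> ((nat \<Rightarrow> nat) \<Rightarrow> complex) \<Rightarrow> nat list set \<Rightarrow> nat list \<Rightarrow> (nat list \<Rightarrow> complex)" where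
  "onb m n chi D \<alpha> = (let L = sorted_list_of_set D in
      gs_aux (tinner m n) [] (map (estar m n chi) L) ! idx L \<alpha>)"

definition tensor_op :: "nat \<Rightarrow> nat \<Rightarrow> (nat \<Rightarrow> nat \<Rightarrow> complex) \<Rightarrow> (nat list \<Rightarrow> complex) \<Rightarrow> (nat list \<Rightarrow> complex)" where
  "tensor_op m n A f = (\<lambda>\<beta>. if \<beta> \<in> Gam m n then
      (\<Sum>\<alpha>\<in>Gam m n. (\<Prod>i<m. A (\<beta> ! i) (\<alpha> ! i)) * f \<alpha>) else 0)"

definition KchiMat :: "nat \<Rightarrow> nat \<Rightarrow> ((nat \<Rightarrow> nat) \<Rightarrow> complex) \<Rightarrow> nat list set \<Rightarrow> (nat \<Rightarrow> nat \<Rightarrow> complex) \<Rightarrow> nat list \<Rightarrow> nat list \<Rightarrow> complex" where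
  "KchiMat m n chi D A \<alpha> \<beta> = tinner m n (tensor_op m n A (onb m n chi D \<beta>)) (onb m n chi D \<alpha>)"

definition partial :: "nat \<Rightarrow> ((nat \<Rightarrow> complex) \<Rightarrow> complex) \<Rightarrow> ((nat \<Rightarrow> complex) \<Rightarrow> complex)" where
  "partial j F = (\<lambda>t. deriv (\<lambda>s. F (t(j := s))) (t j))"

fun mpartial :: "nat \<Rightarrow> ((nat \<Rightarrow> complex) \<Rightarrow> complex) \<Rightarrow> ((nat \<Rightarrow> complex) \<Rightarrow> complex)" where
  "mpartial 0 F = F"
| "mpartial (Suc j) F = partial (Suc j) (mpartial j F)"

definition DkKchi :: "nat \<Rightarrow> nat \<Rightarrow> ((nat \<Rightarrow> nat) \<Rightarrow> complex) \<Rightarrow> nat list set \<Rightarrow> nat \<Rightarrow>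
    (nat \<Rightarrow> nat \<Rightarrow> complex) \<Rightarrow> (nat \<Rightarrow> nat \<Rightarrow> nat \<Rightarrow> complex) \<Rightarrow> nat list \<Rightarrow> nat list \<Rightarrow> complex" where
  "DkKchi m n chi D k A X \<alpha> \<beta> =
     mpartial k (\<lambda>t. KchiMat m n chi D (\<lambda>i j. A i j + (\<Sum>l=1..k. t l * X l i j)) \<alpha> \<beta>) (\<lambda>_. 0)"

definition imm :: "nat \<Rightarrow> ((nat \<Rightarrow> nat) \<Rightarrow> complex) \<Rightarrow> (nat \<Rightarrow> nat \<Rightarrow> complex) \<Rightarrow> complex" where
  "imm m \<psi> Y = (\<Sum>\<sigma>\<in>perms m. \<psi> \<sigma> * (\<Prod>i<m. Y i (\<sigma> i)))"

(* mixed immanant of Y^1..Y^m, given as Ys 0, ..., Ys (m-1) *)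
definition mix_imm :: "nat \<Rightarrow> ((nat \<Rightarrow> nat) \<Rightarrow> complex) \<Rightarrow> (nat \<Rightarrow> nat \<Rightarrow> nat \<Rightarrow> complex) \<Rightarrow> complex" where
  "mix_imm m \<psi> Ys = (\<Sum>\<sigma>\<in>perms m. imm m \<psi> (\<lambda>i j. Ys (\<sigma> j) i j)) / of_nat (fact m)"

definition submat :: "(nat \<Rightarrow> nat \<Rightarrow> complex) \<Rightarrow> nat list \<Rightarrow> nat list \<Rightarrow> (nat \<Rightarrow> nat \<Rightarrow> complex)" where
  "submat Y \<delta> \<gamma> = (\<lambda>i j. Y (\<delta> ! i) (\<gamma> ! j))"

definition cnjchar :: "((nat \<Rightarrow> nat) \<Rightarrow> complex) \<Rightarrow> ((nat \<Rightarrow> nat) \<Rightarrow> complex)" where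
  "cnjchar chi = (\<lambda>\<sigma>. cnj (chi \<sigma>))"

definition miximm :: "nat \<Rightarrow> ((nat \<Rightarrow> nat) \<Rightarrow> complex) \<Rightarrow> nat \<Rightarrow> (nat \<Rightarrow> nat \<Rightarrow> complex) \<Rightarrow>
    (nat \<Rightarrow> nat \<Rightarrow> nat \<Rightarrow> complex) \<Rightarrow> nat list \<Rightarrow> nat list \<Rightarrow> complex" where
  "miximm m \<psi> k A X \<delta> \<gamma> =
     mix_imm m \<psi> (\<lambda>l. if l < m - k then submat A \<delta> \<gamma> else submat (X (l - (m - k) + 1)) \<delta> \<gamma>)"

definition congr :: "nat list set \<Rightarrow> (nat list \<Rightarrow> nat list \<Rightarrow> complex) \<Rightarrow> (nat list \<Rightarrow> nat list \<Rightarrow> complex) \<Rightarrow> nat list \<Rightarrow> nat list \<Rightarrow> complex" where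
  "congr D B M \<alpha> \<beta> = (\<Sum>\<delta>\<in>D. \<Sum>\<gamma>\<in>D. cnj (B \<delta> \<alpha>) * M \<delta> \<gamma> * B \<gamma> \<beta>)"

definition Qkm :: "nat \<Rightarrow> nat \<Rightarrow> nat list set" where
  "Qkm k m = {\<rho>. length \<rho> = k \<and> sorted_wrt (<) \<rho> \<and> set \<rho> \<subseteq> {0..<m}}"

definition compl :: "nat \<Rightarrow> nat list \<Rightarrow> nat list" where
  "compl m \<rho> = filter (\<lambda>i. i \<notin> set \<rho>) [0..<m]"

definition Xst :: "(nat \<Rightarrow> nat \<Rightarrow> nat \<Rightarrow> complex) \<Rightarrow> nat list \<Rightarrow> nat list \<Rightarrow> (nat \<Rightarrow> nat) \<Rightarrow> nat list \<Rightarrow> (nat \<Rightarrow> nat \<Rightarrow> complex)" where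
  "Xst X \<delta> \<gamma> \<sigma> \<tau> = (\<lambda>i j. if j \<in> set \<tau> then submat (X (\<sigma> (idx \<tau> j) + 1)) \<delta> \<gamma> i j else 0)"

definition subsq :: "(nat \<Rightarrow> nat \<Rightarrow> complex) \<Rightarrow> nat list \<Rightarrow> nat list \<Rightarrow> (nat \<Rightarrow> nat \<Rightarrow> complex)" where
  "subsq Y \<rho> \<tau> = (\<lambda>i j. Y (\<rho> ! i) (\<tau> ! j))"

definition cominor :: "nat \<Rightarrow> (nat \<Rightarrow> nat \<Rightarrow> complex) \<Rightarrow> nat list \<Rightarrow> nat list \<Rightarrow> (nat \<Rightarrow> nat \<Rightarrow> complex)" where
  "cominor m Y \<rho> \<tau> = (\<lambda>i j. Y (compl m \<rho> ! i) (compl m \<tau> ! j))"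

definition blockdsum :: "nat \<Rightarrow> (nat \<Rightarrow> nat \<Rightarrow> complex) \<Rightarrow> (nat \<Rightarrow> nat \<Rightarrow> complex) \<Rightarrow> nat list \<Rightarrow> nat list \<Rightarrow> (nat \<Rightarrow> nat \<Rightarrow> complex)" where
  "blockdsum m P R \<rho> \<tau> = (\<lambda>i j.
     if i \<in> set \<rho> \<and> j \<in> set \<tau> then P (idx \<rho> i) (idx \<tau> j)
     else if i \<notin> set \<rho> \<and> j \<notin> set \<tau> then R (idx (compl m \<rho>) i) (idx (compl m \<tau>) j)
     else 0)"

end

theory Submission
  imports Defs "Jordan_Normal_Form.Spectral_Radius" "Jordan_Normal_Form.Determinant"
begin

text \<open>Expanding \<open>v\<^sub>\<alpha>\<close> in the basis \<open>e\<^sup>*\<^sub>\<gamma>\<close>, the \<open>(\<alpha>, \<beta>)\<close> entry of \<open>K\<^sub>\<chi>(A)\<close> is the sum of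
  \<open>b\<^sub>\<gamma>\<^sub>\<beta> cnj(b\<^sub>\<delta>\<^sub>\<alpha>) \<langle>A\<^sup>\<otimes>\<^sup>m e\<^sup>*\<^sub>\<gamma>, e\<^sup>*\<^sub>\<delta>\<rangle>\<close> over \<open>\<gamma>, \<delta>\<close>, and the orthogonality relations of the
  irreducible character \<open>\<chi>\<close> (from Schur's lemma) reduce the inner product to
  \<open>\<chi>(id)/m!\<close> times the \<open>cnj \<chi>\<close>-immanant of \<open>A[\<delta>|\<gamma>]\<close>. This is a polynomial in the entries of \<open>A\<close>;
  its mixed derivative in the directions \<open>X\<^sup>1, \<dots>, X\<^sup>k\<close> replaces, in each product
  \<open>\<Prod>\<^sub>i A(\<delta>\<^sub>i, \<gamma>\<^sub>\<pi>\<^sub>i)\<close>, the factors in \<open>k\<close> distinct rows \<open>f\<^sub>1, \<dots>, f\<^sub>k\<close> by the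
  corresponding entries of \<open>X\<^sup>1, \<dots>, X\<^sup>k\<close>, summed over all injective lists \<open>f\<close>. Both formulas of
  the theorem regroup this sum: in the mixed immanant every list \<open>f\<close> arises from exactly
  \<open>(m - k)!\<close> permutations, and in the block direct sum formula every \<open>f\<close> corresponds to exactly
  one triple \<open>(\<sigma>, \<rho>, \<tau>)\<close> with non-zero term.\<close>

(* HOL-Algebra's group-inverse notation would shadow Fun.inv on permutations. *)
no_notation m_inv (\<open>(\<open>open_block notation=\<open>prefix inv\<close>\<close>inv\<index> _)\<close> [81] 80)

lemma perms_inv: "\<sigma> \<in> perms m \<Longrightarrow> inv \<sigma> \<in> perms m"
  by (simp add: perms_def permutes_inv)

lemma perms_comp: "\<sigma> \<in> perms m \<Longrightarrow> \<tau> \<in> perms m \<Longrightarrow> \<sigma> \<circ> \<tau> \<in> perms m"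
  by (simp add: perms_def permutes_compose)

lemma perms_id [simp]: "id \<in> perms m"
  by (simp add: perms_def)

lemma finite_perms [simp]: "finite (perms m)"
  using finite_permutations[of "{0..<m}"] by (simp add: perms_def)

lemma card_perms: "card (perms m) = fact m"
  using card_permutations[of "{0..<m}" m] by (simp add: perms_def)

lemma perms_inv_o: "\<sigma> \<in> perms m \<Longrightarrow> inv \<sigma> \<circ> \<sigma> = id" "\<sigma> \<in> perms m \<Longrightarrow> \<sigma> \<circ> inv \<sigma> = id"
  by (auto simp: perms_def permutes_inv_o)

lemma perms_inverses: "\<sigma> \<in> perms m \<Longrightarrow> \<sigma> (inv \<sigma> x) = x" "\<sigma> \<in> perms m \<Longrightarrow> inv \<sigma> (\<sigma> x) = x"
  by (auto simp: perms_def permutes_inverses)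

lemma perms_inv_inv: "\<sigma> \<in> perms m \<Longrightarrow> inv (inv \<sigma>) = \<sigma>"
  by (auto simp: perms_def permutes_inv_inv)

lemma perms_inj: "\<sigma> \<in> perms m \<Longrightarrow> inj \<sigma>"
  by (simp add: perms_def permutes_inj)

lemma perms_less: "\<sigma> \<in> perms m \<Longrightarrow> i < m \<Longrightarrow> \<sigma> i < m"
  unfolding perms_def using permutes_in_image[of \<sigma> "{0..<m}" i] by auto

lemma perms_inv_comp: "\<sigma> \<in> perms m \<Longrightarrow> \<tau> \<in> perms m \<Longrightarrow> inv (\<sigma> \<circ> \<tau>) = inv \<tau> \<circ> inv \<sigma>"
  by (rule o_inv_distrib) (auto simp: perms_def permutes_bij)

lemma bij_betw_perms_comp_right: "\<tau> \<in> perms m \<Longrightarrow> bij_betw (\<lambda>\<sigma>. \<sigma> \<circ> \<tau>) (perms m) (perms m)"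
  by (rule bij_betw_byWitness[where f'="\<lambda>\<sigma>. \<sigma> \<circ> inv \<tau>"])
     (auto simp: o_assoc[symmetric] perms_inv_o perms_comp perms_inv)

lemma bij_betw_perms_comp_left: "\<tau> \<in> perms m \<Longrightarrow> bij_betw (\<lambda>\<sigma>. \<tau> \<circ> \<sigma>) (perms m) (perms m)"
  by (rule bij_betw_byWitness[where f'="\<lambda>\<sigma>. inv \<tau> \<circ> \<sigma>"])
     (auto simp: o_assoc perms_inv_o perms_comp perms_inv)

lemma bij_betw_perms_inv: "bij_betw inv (perms m) (perms m)"
  by (rule bij_betw_byWitness[where f'="inv"]) (auto simp: perms_inv_inv perms_inv)

lemma sum_perms_comp_right: "\<tau> \<in> perms m \<Longrightarrow> (\<Sum>\<sigma>\<in>perms m. g (\<sigma> \<circ> \<tau>)) = (\<Sum>\<sigma>\<in>perms m. g \<sigma>)"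
  using sum.reindex_bij_betw[OF bij_betw_perms_comp_right] by blast

lemma sum_perms_comp_left: "\<tau> \<in> perms m \<Longrightarrow> (\<Sum>\<sigma>\<in>perms m. g (\<tau> \<circ> \<sigma>)) = (\<Sum>\<sigma>\<in>perms m. g \<sigma>)"
  using sum.reindex_bij_betw[OF bij_betw_perms_comp_left] by blast

lemma sum_perms_inv: "(\<Sum>\<sigma>\<in>perms m. g (inv \<sigma>)) = (\<Sum>\<sigma>\<in>perms m. g \<sigma>)"
  using sum.reindex_bij_betw[OF bij_betw_perms_inv] by blast

definition mat_one :: "nat \<Rightarrow> nat \<Rightarrow> nat \<Rightarrow> complex" where
  "mat_one d = (\<lambda>i j. if i = j \<and> i < d then 1 else 0)"

definition mat_trace :: "nat \<Rightarrow> (nat \<Rightarrow> nat \<Rightarrow> complex) \<Rightarrow> complex" where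
  "mat_trace d M = (\<Sum>i<d. M i i)"

lemma if_one_zero_mult [simp]:
  "(if P then 1 else 0) * (x::complex) = (if P then x else 0)"
  "x * (if P then 1 else 0) = (if P then x else 0)"
  by auto

lemma mat_mult_assoc: "mat_mult d (mat_mult d M N) P = mat_mult d M (mat_mult d N P)"
  unfolding mat_mult_def
  by (auto simp: fun_eq_iff sum_distrib_left sum_distrib_right mult.assoc intro: sum.swap)

lemma mat_mult_one_left: "mat_mult d (mat_one d) M = (\<lambda>i j. if i < d then M i j else 0)"
  unfolding mat_mult_def mat_one_def by (auto simp: fun_eq_iff)

lemma mat_mult_one_right: "mat_mult d M (mat_one d) = (\<lambda>i j. if j < d then M i j else 0)"
  unfolding mat_mult_def mat_one_def by (auto simp: fun_eq_iff)

lemma mat_trace_mult_comm: "mat_trace d (mat_mult d M N) = mat_trace d (mat_mult d N M)"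
  unfolding mat_trace_def mat_mult_def by (subst sum.swap) (simp add: mult.commute)

lemma mat_trace_one_left: "mat_trace d (mat_mult d (mat_one d) M) = mat_trace d M"
  unfolding mat_mult_one_left mat_trace_def by simp

lemma mat_trace_one_right: "mat_trace d (mat_mult d M (mat_one d)) = mat_trace d M"
  unfolding mat_mult_one_right mat_trace_def by simp

lemma mat_mult_sum_left:
  "mat_mult d (\<lambda>i j. \<Sum>s\<in>S. F s i j) N = (\<lambda>i j. \<Sum>s\<in>S. mat_mult d (F s) N i j)"
  unfolding mat_mult_def by (auto simp: fun_eq_iff sum_distrib_right intro: sum.swap)

lemma mat_mult_sum_right:
  "mat_mult d N (\<lambda>i j. \<Sum>s\<in>S. F s i j) = (\<lambda>i j. \<Sum>s\<in>S. mat_mult d N (F s) i j)"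
  unfolding mat_mult_def by (auto simp: fun_eq_iff sum_distrib_left intro: sum.swap)

lemma mat_vec_mat_vec: "mat_vec d M (mat_vec d N g) = mat_vec d (mat_mult d M N) g"
  unfolding mat_vec_def mat_mult_def
  by (auto simp: fun_eq_iff sum_distrib_left sum_distrib_right mult.assoc intro: sum.swap)

lemma mat_mult_unit_middle:
  assumes "a < d" "b < d"
  shows "mat_mult d (mat_mult d R (\<lambda>x y. if x = a \<and> y = b then 1 else 0)) S i j = R i a * S b j"
proof -
  have "(\<Sum>n<d. R i n * (if n = a \<and> l = b then 1 else 0)) = (if l = b then R i a else 0)" for l
    using assms by (cases "l = b") auto
  thus ?thesis
    unfolding mat_mult_def using assms by (simp add: if_distrib[of "\<lambda>x. x * _"] cong: if_cong)
qed

definition to_jnf :: "nat \<Rightarrow> (nat \<Rightarrow> nat \<Rightarrow> complex) \<Rightarrow> complex mat" where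
  "to_jnf d M = mat d d (\<lambda>(i, j). M i j)"

lemma to_jnf_mult_index:
  "i < d \<Longrightarrow> j < d \<Longrightarrow> (to_jnf d M * to_jnf d N) $$ (i, j) = mat_mult d M N i j"
  by (simp add: to_jnf_def mat_mult_def scalar_prod_def lessThan_atLeast0)

lemma to_jnf_mult_vec_index:
  fixes v :: "complex Matrix.vec"
  shows "i < d \<Longrightarrow> v \<in> carrier_vec d \<Longrightarrow>
    (to_jnf d M *\<^sub>v v) $ i = mat_vec d M (\<lambda>j. if j < d then v $ j else 0) i"
  by (simp add: to_jnf_def mat_vec_def scalar_prod_def lessThan_atLeast0)

lemma vec_eq_zero_if_restriction_zero:
  fixes v :: "complex Matrix.vec"
  assumes "v \<in> carrier_vec d" "(\<lambda>j. if j < d then v $ j else 0) = (\<lambda>_. 0)"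
  shows "v = 0\<^sub>v d"
proof (rule eq_vecI)
  fix i assume "i < dim_vec (0\<^sub>v d :: complex vec)"
  then show "v $ i = 0\<^sub>v d $ i" using fun_cong[OF assms(2), of i] by simp
qed (use assms(1) in simp)

lemma mat_mult_inverse_exists:
  assumes zero: "\<And>i j. d \<le> i \<or> d \<le> j \<Longrightarrow> M i j = 0"
    and kernel: "\<And>g. g \<in> cvecs d \<Longrightarrow> \<forall>i<d. mat_vec d M g i = 0 \<Longrightarrow> g = (\<lambda>_. 0)"
  shows "\<exists>G. mat_mult d G M = mat_one d \<and> mat_mult d M G = mat_one d"
proof -
  have M': "to_jnf d M \<in> carrier_mat d d" by (simp add: to_jnf_def)
  have "Determinant.det (to_jnf d M) \<noteq> 0"
  proof
    assume "Determinant.det (to_jnf d M) = 0"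
    then obtain v where v: "v \<in> carrier_vec d" "v \<noteq> 0\<^sub>v d" "to_jnf d M *\<^sub>v v = 0\<^sub>v d"
      using det_0_iff_vec_prod_zero[OF M'] by auto
    have "(\<lambda>j. if j < d then v $ j else 0) = (\<lambda>_. 0)"
    proof (rule kernel)
      show "\<forall>i<d. mat_vec d M (\<lambda>j. if j < d then v $ j else 0) i = 0"
      proof (intro allI impI)
        fix i assume i: "i < d"
        have "(to_jnf d M *\<^sub>v v) $ i = 0" using v(3) i by simp
        then show "mat_vec d M (\<lambda>j. if j < d then v $ j else 0) i = 0"
          using to_jnf_mult_vec_index[OF i v(1)] by simp
      qed
    qed (simp add: cvecs_def)
    with v show False using vec_eq_zero_if_restriction_zero by blast
  qed
  from det_non_zero_imp_unit[OF M' this, of "()"] obtain G' where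
    G': "G' \<in> carrier_mat d d" "G' * to_jnf d M = 1\<^sub>m d" "to_jnf d M * G' = 1\<^sub>m d"
    unfolding Units_def by (auto simp: ring_mat_simps)
  define G where "G = (\<lambda>i j. if i < d \<and> j < d then G' $$ (i,j) else 0)"
  have G'_eq: "to_jnf d G = G'"
    using G'(1) by (auto simp: to_jnf_def G_def)
  have "mat_mult d G M i j = mat_one d i j \<and> mat_mult d M G i j = mat_one d i j" for i j
  proof (cases "i < d \<and> j < d")
    case True
    then show ?thesis
      using to_jnf_mult_index[of i d j G M] to_jnf_mult_index[of i d j M G] G'
      by (simp add: G'_eq mat_one_def)
  qed (auto simp: mat_mult_def G_def mat_one_def zero)
  then show ?thesis by blast
qed

lemma mat_vec_eigenvector_exists:
  assumes "0 < d"
  shows "\<exists>c f. f \<in> cvecs d \<and> f \<noteq> (\<lambda>_. 0) \<and> (\<forall>i<d. mat_vec d M f i = c * f i)"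
proof -
  have M': "to_jnf d M \<in> carrier_mat d d" by (simp add: to_jnf_def)
  from spectrum_non_empty[OF M' assms] obtain c where "c \<in> spectrum (to_jnf d M)" by auto
  then obtain v where v: "v \<in> carrier_vec d" "v \<noteq> 0\<^sub>v d" "to_jnf d M *\<^sub>v v = c \<cdot>\<^sub>v v"
    unfolding spectrum_def eigenvalue_def eigenvector_def using M' by auto
  define f where "f = (\<lambda>j. if j < d then v $ j else 0)"
  have "mat_vec d M f i = c * f i" if "i < d" for i
    using that v(1) arg_cong[OF v(3), of "\<lambda>w. w $ i"] to_jnf_mult_vec_index[OF that v(1), of M]
    by (simp add: f_def)
  moreover have "f \<noteq> (\<lambda>_. 0)" using v vec_eq_zero_if_restriction_zero unfolding f_def by blast
  moreover have "f \<in> cvecs d" by (simp add: f_def cvecs_def)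
  ultimately show ?thesis by blast
qed

lemma sum_swap_2_2:
  "(\<Sum>i\<in>A. \<Sum>j\<in>B. \<Sum>s\<in>C. \<Sum>l\<in>D. f i j s l) = (\<Sum>s\<in>C. \<Sum>l\<in>D. \<Sum>i\<in>A. \<Sum>j\<in>B. (f i j s l::'a::comm_monoid_add))"
proof -
  have "(\<Sum>i\<in>A. \<Sum>j\<in>B. \<Sum>s\<in>C. \<Sum>l\<in>D. f i j s l) = (\<Sum>i\<in>A. \<Sum>s\<in>C. \<Sum>j\<in>B. \<Sum>l\<in>D. f i j s l)"
    by (rule sum.cong[OF refl], rule sum.swap)
  also have "\<dots> = (\<Sum>s\<in>C. \<Sum>i\<in>A. \<Sum>l\<in>D. \<Sum>j\<in>B. f i j s l)"
    by (subst sum.swap) (intro sum.cong refl, rule sum.swap)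
  also have "\<dots> = (\<Sum>s\<in>C. \<Sum>l\<in>D. \<Sum>i\<in>A. \<Sum>j\<in>B. f i j s l)"
    by (intro sum.cong refl, rule sum.swap)
  finally show ?thesis .
qed

lemma sum_swap_1_3:
  "(\<Sum>s\<in>A. \<Sum>i\<in>B. \<Sum>j\<in>C. \<Sum>l\<in>D. f s i j l) = (\<Sum>i\<in>B. \<Sum>j\<in>C. \<Sum>l\<in>D. \<Sum>s\<in>A. (f s i j l::'a::comm_monoid_add))"
proof -
  have "(\<Sum>s\<in>A. \<Sum>i\<in>B. \<Sum>j\<in>C. \<Sum>l\<in>D. f s i j l) = (\<Sum>i\<in>B. \<Sum>s\<in>A. \<Sum>j\<in>C. \<Sum>l\<in>D. f s i j l)"
    by (rule sum.swap)
  also have "\<dots> = (\<Sum>i\<in>B. \<Sum>j\<in>C. \<Sum>s\<in>A. \<Sum>l\<in>D. f s i j l)"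
    by (intro sum.cong refl, rule sum.swap)
  also have "\<dots> = (\<Sum>i\<in>B. \<Sum>j\<in>C. \<Sum>l\<in>D. \<Sum>s\<in>A. f s i j l)"
    by (intro sum.cong refl, rule sum.swap)
  finally show ?thesis .
qed

section \<open>Characters of irreducible representations\<close>

locale irrep =
  fixes m d :: nat and \<rho> :: "(nat \<Rightarrow> nat) \<Rightarrow> nat \<Rightarrow> nat \<Rightarrow> complex"
  assumes irreducible: "irreducible_rep m d \<rho>"
begin

lemma degree_pos: "0 < d"
  using irreducible by (simp add: irreducible_rep_def)

lemma rep_zero: "\<sigma> \<in> perms m \<Longrightarrow> d \<le> i \<or> d \<le> j \<Longrightarrow> \<rho> \<sigma> i j = 0"
  using irreducible by (auto simp: irreducible_rep_def is_rep_def)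

lemma rep_id: "\<rho> id = mat_one d"
  using irreducible by (auto simp: irreducible_rep_def is_rep_def mat_one_def)

lemma rep_mult: "\<sigma> \<in> perms m \<Longrightarrow> \<tau> \<in> perms m \<Longrightarrow> \<rho> (\<sigma> \<circ> \<tau>) = mat_mult d (\<rho> \<sigma>) (\<rho> \<tau>)"
  using irreducible by (auto simp: irreducible_rep_def is_rep_def)

lemma rep_mult_inv: "\<sigma> \<in> perms m \<Longrightarrow> mat_mult d (\<rho> \<sigma>) (\<rho> (inv \<sigma>)) = mat_one d"
  using rep_mult[of \<sigma> "inv \<sigma>"] perms_inv_o[of \<sigma> m] perms_inv[of \<sigma> m] rep_id by simp

lemma schur_lemma:
  assumes comm: "\<forall>\<tau>\<in>perms m. mat_mult d M (\<rho> \<tau>) = mat_mult d (\<rho> \<tau>) M"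
  shows "\<exists>c. \<forall>i<d. \<forall>j<d. M i j = (if i = j then c else 0)"
proof -
  obtain c f where f: "f \<in> cvecs d" "f \<noteq> (\<lambda>_. 0)" "\<forall>i<d. mat_vec d M f i = c * f i"
    using mat_vec_eigenvector_exists[OF degree_pos] by blast
  define W where "W = {g \<in> cvecs d. \<forall>i<d. mat_vec d M g i = c * g i}"
  have subspace: "is_subspace d W"
    unfolding is_subspace_def W_def cvecs_def mat_vec_def
    by (auto simp: sum.distrib distrib_left algebra_simps simp flip: sum_distrib_left)
  have invariant: "\<forall>\<sigma>\<in>perms m. \<forall>w\<in>W. mat_vec d (\<rho> \<sigma>) w \<in> W"
  proof (intro ballI)
    fix \<sigma> w assume \<sigma>: "\<sigma> \<in> perms m" and w: "w \<in> W"
    have "mat_vec d M (mat_vec d (\<rho> \<sigma>) w) i = c * mat_vec d (\<rho> \<sigma>) w i" if "i < d" for i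
    proof -
      have "mat_vec d M (mat_vec d (\<rho> \<sigma>) w) i = mat_vec d (\<rho> \<sigma>) (mat_vec d M w) i"
        by (simp add: mat_vec_mat_vec comm \<sigma>)
      also have "\<dots> = (\<Sum>j<d. \<rho> \<sigma> i j * (c * w j))"
        using w by (simp add: mat_vec_def W_def)
      finally show ?thesis by (simp add: mat_vec_def sum_distrib_left mult.left_commute)
    qed
    moreover have "mat_vec d (\<rho> \<sigma>) w \<in> cvecs d"
      using rep_zero[OF \<sigma>] by (auto simp: cvecs_def mat_vec_def)
    ultimately show "mat_vec d (\<rho> \<sigma>) w \<in> W" by (simp add: W_def)
  qed
  have "f \<in> W" using f by (simp add: W_def)
  then have "W \<noteq> {\<lambda>_. 0}" using f(2) by blast
  then have W_all: "W = cvecs d"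
    using irreducible subspace invariant unfolding irreducible_rep_def by blast
  have "mat_vec d M (\<lambda>l. if l = j then 1 else 0) i = c * (if i = j then 1 else 0)"
    if "i < d" "j < d" for i j
  proof -
    have "(\<lambda>l. if l = j then 1 else 0) \<in> W" using W_all that by (simp add: cvecs_def)
    then show ?thesis using that by (simp add: W_def)
  qed
  moreover have "mat_vec d M (\<lambda>l. if l = j then 1 else 0) i = M i j" if "j < d" for i j
    using that by (simp add: mat_vec_def)
  ultimately show ?thesis by auto
qed

definition group_average :: "(nat \<Rightarrow> nat \<Rightarrow> complex) \<Rightarrow> nat \<Rightarrow> nat \<Rightarrow> complex" where
  "group_average E = (\<lambda>i j. \<Sum>\<sigma>\<in>perms m. mat_mult d (mat_mult d (\<rho> (inv \<sigma>)) E) (\<rho> \<sigma>) i j)"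

lemma group_average_commutes:
  assumes \<tau>: "\<tau> \<in> perms m"
  shows "mat_mult d (group_average E) (\<rho> \<tau>) = mat_mult d (\<rho> \<tau>) (group_average E)"
proof -
  have "mat_mult d (group_average E) (\<rho> \<tau>)
      = (\<lambda>i j. \<Sum>\<sigma>\<in>perms m. mat_mult d (mat_mult d (\<rho> (inv \<sigma>)) E) (\<rho> (\<sigma> \<circ> \<tau>)) i j)"
    unfolding group_average_def mat_mult_sum_left
    by (intro ext sum.cong refl) (simp add: mat_mult_assoc rep_mult \<tau>)
  also have "\<dots> = (\<lambda>i j. \<Sum>\<sigma>\<in>perms m. mat_mult d (mat_mult d (\<rho> (\<tau> \<circ> inv \<sigma>)) E) (\<rho> \<sigma>) i j)"
  proof (intro ext)
    fix i j
    have "(\<Sum>\<sigma>\<in>perms m. mat_mult d (mat_mult d (\<rho> (\<tau> \<circ> inv \<sigma>)) E) (\<rho> \<sigma>) i j)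
      = (\<Sum>\<sigma>\<in>perms m. mat_mult d (mat_mult d (\<rho> (\<tau> \<circ> inv (\<sigma> \<circ> \<tau>))) E) (\<rho> (\<sigma> \<circ> \<tau>)) i j)"
      by (rule sum_perms_comp_right[OF \<tau>, symmetric])
    also have "\<dots> = (\<Sum>\<sigma>\<in>perms m. mat_mult d (mat_mult d (\<rho> (inv \<sigma>)) E) (\<rho> (\<sigma> \<circ> \<tau>)) i j)"
      by (intro sum.cong refl)
         (simp add: perms_inv_comp \<tau> o_assoc perms_inv_o[OF \<tau>] perms_inv)
    finally show "(\<Sum>\<sigma>\<in>perms m. mat_mult d (mat_mult d (\<rho> (inv \<sigma>)) E) (\<rho> (\<sigma> \<circ> \<tau>)) i j) =
         (\<Sum>\<sigma>\<in>perms m. mat_mult d (mat_mult d (\<rho> (\<tau> \<circ> inv \<sigma>)) E) (\<rho> \<sigma>) i j)" by simp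
  qed
  also have "\<dots> = mat_mult d (\<rho> \<tau>) (group_average E)"
    unfolding group_average_def mat_mult_sum_right
    by (intro ext sum.cong refl) (simp add: mat_mult_assoc[symmetric] rep_mult \<tau> perms_inv)
  finally show ?thesis .
qed

lemma trace_group_average: "mat_trace d (group_average E) = fact m * mat_trace d E"
proof -
  have "mat_trace d (group_average E)
      = (\<Sum>\<sigma>\<in>perms m. mat_trace d (mat_mult d (mat_mult d (\<rho> (inv \<sigma>)) E) (\<rho> \<sigma>)))"
    unfolding group_average_def mat_trace_def by (rule sum.swap)
  also have "\<dots> = (\<Sum>\<sigma>\<in>perms m. mat_trace d E)"
  proof (intro sum.cong refl)
    fix \<sigma> assume \<sigma>: "\<sigma> \<in> perms m"
    have "mat_trace d (mat_mult d (mat_mult d (\<rho> (inv \<sigma>)) E) (\<rho> \<sigma>))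
        = mat_trace d (mat_mult d (\<rho> \<sigma>) (mat_mult d (\<rho> (inv \<sigma>)) E))"
      by (rule mat_trace_mult_comm)
    also have "\<dots> = mat_trace d E"
      by (simp add: mat_mult_assoc[symmetric] rep_mult_inv \<sigma> mat_trace_one_left)
    finally show "mat_trace d (mat_mult d (mat_mult d (\<rho> (inv \<sigma>)) E) (\<rho> \<sigma>)) = mat_trace d E" .
  qed
  finally show ?thesis by (simp add: card_perms)
qed

lemma schur_orthogonality:
  assumes "i < d" "j < d" "a < d" "b < d"
  shows "(\<Sum>\<sigma>\<in>perms m. \<rho> (inv \<sigma>) i a * \<rho> \<sigma> b j) = (if i = j \<and> a = b then fact m / d else 0)"
proof -
  define E where "E = (\<lambda>x y. if x = a \<and> y = b then (1::complex) else 0)"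
  obtain c where c: "\<forall>i<d. \<forall>j<d. group_average E i j = (if i = j then c else 0)"
    using schur_lemma[of "group_average E"] group_average_commutes by blast
  have "of_nat d * c = fact m * mat_trace d E"
    using c trace_group_average[of E] by (simp add: mat_trace_def)
  moreover have "mat_trace d E = (if a = b then 1 else 0)"
    using assms by (simp add: mat_trace_def E_def)
  moreover have "group_average E i j = (\<Sum>\<sigma>\<in>perms m. \<rho> (inv \<sigma>) i a * \<rho> \<sigma> b j)"
    unfolding group_average_def E_def using assms by (simp add: mat_mult_unit_middle)
  ultimately show ?thesis
    using c assms degree_pos by (auto simp: field_simps)
qed

definition rep_adjoint :: "(nat \<Rightarrow> nat) \<Rightarrow> nat \<Rightarrow> nat \<Rightarrow> complex" where
  "rep_adjoint \<sigma> = (\<lambda>i j. cnj (\<rho> \<sigma> j i))"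

definition invariant_form :: "nat \<Rightarrow> nat \<Rightarrow> complex" where
  "invariant_form = (\<lambda>i j. \<Sum>\<sigma>\<in>perms m. mat_mult d (rep_adjoint \<sigma>) (\<rho> \<sigma>) i j)"

lemma rep_adjoint_mult:
  "\<sigma> \<in> perms m \<Longrightarrow> \<tau> \<in> perms m \<Longrightarrow> rep_adjoint (\<sigma> \<circ> \<tau>) = mat_mult d (rep_adjoint \<tau>) (rep_adjoint \<sigma>)"
  unfolding rep_adjoint_def by (simp add: rep_mult mat_mult_def fun_eq_iff mult.commute)

lemma invariant_form_invariant:
  assumes \<tau>: "\<tau> \<in> perms m"
  shows "mat_mult d (rep_adjoint \<tau>) (mat_mult d invariant_form (\<rho> \<tau>)) = invariant_form"
proof -
  have "mat_mult d (rep_adjoint \<tau>) (mat_mult d invariant_form (\<rho> \<tau>))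
      = (\<lambda>i j. \<Sum>\<sigma>\<in>perms m. mat_mult d (rep_adjoint (\<sigma> \<circ> \<tau>)) (\<rho> (\<sigma> \<circ> \<tau>)) i j)"
    unfolding invariant_form_def mat_mult_sum_left mat_mult_sum_right
    by (intro ext sum.cong refl) (simp add: mat_mult_assoc rep_adjoint_mult rep_mult \<tau>)
  also have "\<dots> = invariant_form"
    unfolding invariant_form_def by (intro ext sum_perms_comp_right[OF \<tau>])
  finally show ?thesis .
qed

lemma invariant_form_intertwines:
  assumes \<tau>: "\<tau> \<in> perms m" and j: "j < d"
  shows "mat_mult d (rep_adjoint \<tau>) invariant_form i j = mat_mult d invariant_form (\<rho> (inv \<tau>)) i j"
proof -
  have "mat_mult d invariant_form (\<rho> (inv \<tau>))
      = mat_mult d (mat_mult d (rep_adjoint \<tau>) (mat_mult d invariant_form (\<rho> \<tau>))) (\<rho> (inv \<tau>))"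
    by (simp add: invariant_form_invariant \<tau>)
  also have "\<dots> = mat_mult d (rep_adjoint \<tau>) (mat_mult d invariant_form (mat_one d))"
    by (simp add: mat_mult_assoc rep_mult_inv \<tau>)
  also have "\<dots> = mat_mult d (rep_adjoint \<tau>) (\<lambda>i j. if j < d then invariant_form i j else 0)"
    by (simp add: mat_mult_one_right)
  finally show ?thesis using j by (simp add: mat_mult_def)
qed

lemma invariant_form_zero: "d \<le> i \<or> d \<le> j \<Longrightarrow> invariant_form i j = 0"
  unfolding invariant_form_def mat_mult_def rep_adjoint_def
  by (auto simp: rep_zero perms_def intro!: sum.neutral)

text \<open>The form is positive definite: \<open>g\<^sup>* H g = \<Sum>\<^sub>\<sigma> \<parallel>\<rho>(\<sigma>) g\<parallel>\<^sup>2\<close>, and the term \<open>\<sigma> = id\<close> is \<open>\<parallel>g\<parallel>\<^sup>2\<close>.\<close>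

lemma invariant_form_kernel:
  assumes g: "g \<in> cvecs d" and h: "\<forall>i<d. mat_vec d invariant_form g i = 0"
  shows "g = (\<lambda>_. 0)"
proof -
  define w where "w \<sigma> l = (\<Sum>j<d. \<rho> \<sigma> l j * g j)" for \<sigma> l
  have "(\<Sum>i<d. cnj (g i) * mat_vec d invariant_form g i)
      = (\<Sum>i<d. \<Sum>j<d. \<Sum>\<sigma>\<in>perms m. \<Sum>l<d. cnj (g i) * (cnj (\<rho> \<sigma> l i) * (\<rho> \<sigma> l j * g j)))"
    by (simp add: mat_vec_def invariant_form_def mat_mult_def rep_adjoint_def
                  sum_distrib_left sum_distrib_right mult.assoc)
  also have "\<dots> = (\<Sum>\<sigma>\<in>perms m. \<Sum>l<d. \<Sum>i<d. \<Sum>j<d. cnj (g i) * (cnj (\<rho> \<sigma> l i) * (\<rho> \<sigma> l j * g j)))"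
    by (rule sum_swap_2_2)
  also have "\<dots> = (\<Sum>\<sigma>\<in>perms m. \<Sum>l<d. complex_of_real ((cmod (w \<sigma> l))\<^sup>2))"
  proof (intro sum.cong refl)
    fix \<sigma> l
    have "(\<Sum>i<d. \<Sum>j<d. cnj (g i) * (cnj (\<rho> \<sigma> l i) * (\<rho> \<sigma> l j * g j))) = cnj (w \<sigma> l) * w \<sigma> l"
      by (simp add: w_def cnj_sum sum_product ac_simps) (rule sum.swap)
    then show "(\<Sum>i<d. \<Sum>j<d. cnj (g i) * (cnj (\<rho> \<sigma> l i) * (\<rho> \<sigma> l j * g j)))
        = complex_of_real ((cmod (w \<sigma> l))\<^sup>2)"
      by (simp only: complex_norm_square mult.commute)
  qed
  finally have "complex_of_real (\<Sum>\<sigma>\<in>perms m. \<Sum>l<d. (cmod (w \<sigma> l))\<^sup>2) = 0"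
    using h by (simp add: of_real_sum)
  then have "(\<Sum>\<sigma>\<in>perms m. \<Sum>l<d. (cmod (w \<sigma> l))\<^sup>2) = 0"
    by (simp only: of_real_eq_0_iff)
  then have "(\<Sum>l<d. (cmod (w id l))\<^sup>2) = 0"
    by (subst (asm) sum_nonneg_eq_0_iff) (auto intro: sum_nonneg)
  then have "\<forall>l<d. w id l = 0"
    by (subst (asm) sum_nonneg_eq_0_iff) auto
  moreover have "l < d \<Longrightarrow> w id l = g l" for l
    by (simp add: w_def rep_id mat_one_def)
  moreover have "\<forall>l\<ge>d. g l = 0" using g by (simp add: cvecs_def)
  ultimately show ?thesis by (metis not_less)
qed

lemma trace_rep_inv:
  assumes \<tau>: "\<tau> \<in> perms m"
  shows "mat_trace d (\<rho> (inv \<tau>)) = cnj (mat_trace d (\<rho> \<tau>))"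
proof -
  obtain G where G: "mat_mult d G invariant_form = mat_one d" "mat_mult d invariant_form G = mat_one d"
    using mat_mult_inverse_exists[where M=invariant_form, OF invariant_form_zero invariant_form_kernel]
    by blast
  let ?H = invariant_form
  have "mat_trace d (\<rho> (inv \<tau>)) = mat_trace d (mat_mult d G (mat_mult d ?H (\<rho> (inv \<tau>))))"
    by (simp add: mat_mult_assoc[symmetric] G mat_trace_one_left)
  also have "\<dots> = mat_trace d (mat_mult d G (mat_mult d (rep_adjoint \<tau>) ?H))"
    unfolding mat_trace_def
    by (intro sum.cong refl) (simp add: mat_mult_def[of d G] invariant_form_intertwines[OF \<tau>])
  also have "\<dots> = mat_trace d (mat_mult d (mat_mult d (rep_adjoint \<tau>) ?H) G)"
    by (rule mat_trace_mult_comm)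
  also have "\<dots> = mat_trace d (rep_adjoint \<tau>)"
    by (simp add: mat_mult_assoc G mat_trace_one_right)
  finally show ?thesis by (simp add: mat_trace_def rep_adjoint_def cnj_sum)
qed

lemma trace_rep_convolution:
  assumes \<tau>: "\<tau> \<in> perms m"
  shows "(\<Sum>\<sigma>\<in>perms m. mat_trace d (\<rho> (inv \<sigma>)) * mat_trace d (\<rho> (\<sigma> \<circ> \<tau>))) = fact m / d * mat_trace d (\<rho> \<tau>)"
proof -
  have "(\<Sum>\<sigma>\<in>perms m. mat_trace d (\<rho> (inv \<sigma>)) * mat_trace d (\<rho> (\<sigma> \<circ> \<tau>)))
      = (\<Sum>\<sigma>\<in>perms m. \<Sum>j<d. \<Sum>l<d. \<Sum>i<d. \<rho> (inv \<sigma>) i i * (\<rho> \<sigma> j l * \<rho> \<tau> l j))"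
    by (intro sum.cong refl)
       (simp add: mat_trace_def rep_mult \<tau> mat_mult_def sum_distrib_left sum_distrib_right mult.assoc)
  also have "\<dots> = (\<Sum>j<d. \<Sum>l<d. \<Sum>i<d. \<Sum>\<sigma>\<in>perms m. \<rho> (inv \<sigma>) i i * (\<rho> \<sigma> j l * \<rho> \<tau> l j))"
    by (rule sum_swap_1_3)
  also have "\<dots> = (\<Sum>j<d. \<Sum>l<d. \<Sum>i<d. (if i = l \<and> i = j then fact m / d else 0) * \<rho> \<tau> l j)"
    by (intro sum.cong refl)
       (simp add: mult.assoc[symmetric] sum_distrib_right[symmetric] schur_orthogonality)
  also have "\<dots> = (\<Sum>j<d. fact m / d * \<rho> \<tau> j j)"
  proof (intro sum.cong refl)
    fix j assume j: "j \<in> {..<d}"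
    have "(\<Sum>i<d. (if i = l \<and> i = j then fact m / d else 0) * \<rho> \<tau> l j)
        = (if l = j then fact m / d * \<rho> \<tau> j j else 0)" if "l < d" for l
      using j that
      by (cases "l = j") (auto simp: if_distrib[of "\<lambda>x. x * _"] if_distrib[of complex_of_real] cong: if_cong)
    then show "(\<Sum>l<d. \<Sum>i<d. (if i = l \<and> i = j then fact m / d else 0) * \<rho> \<tau> l j) = fact m / d * \<rho> \<tau> j j"
      using j by simp
  qed
  finally show ?thesis by (simp add: mat_trace_def sum_distrib_left)
qed

end

lemma irreducible_characterE:
  assumes "irreducible_character m chi"
  obtains d \<rho> where "irrep m d \<rho>" "\<And>\<sigma>. \<sigma> \<in> perms m \<Longrightarrow> chi \<sigma> = mat_trace d (\<rho> \<sigma>)"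
  using assms unfolding irreducible_character_def mat_trace_def by (blast intro: irrep.intro)

lemma irreducible_character_id:
  assumes "irreducible_character m chi"
  obtains d where "0 < d" "chi id = of_nat d"
proof -
  obtain d \<rho> where r: "irrep m d \<rho>" and chi: "\<And>\<sigma>. \<sigma> \<in> perms m \<Longrightarrow> chi \<sigma> = mat_trace d (\<rho> \<sigma>)"
    using irreducible_characterE[OF assms] by blast
  have "chi id = of_nat d"
    using chi[of id] irrep.rep_id[OF r] by (simp add: mat_trace_def mat_one_def)
  then show thesis using that irrep.degree_pos[OF r] by blast
qed

lemma irreducible_character_inv:
  assumes "irreducible_character m chi" "\<sigma> \<in> perms m"
  shows "chi (inv \<sigma>) = cnj (chi \<sigma>)"
proof -
  obtain d \<rho> where r: "irrep m d \<rho>" and chi: "\<And>\<sigma>. \<sigma> \<in> perms m \<Longrightarrow> chi \<sigma> = mat_trace d (\<rho> \<sigma>)"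
    using irreducible_characterE[OF assms(1)] by blast
  show ?thesis
    using irrep.trace_rep_inv[OF r assms(2)] chi[OF assms(2)] chi[OF perms_inv[OF assms(2)]] by simp
qed

lemma irreducible_character_convolution:
  assumes "irreducible_character m chi" "\<tau> \<in> perms m"
  shows "(\<Sum>\<sigma>\<in>perms m. chi (inv \<sigma>) * chi (\<sigma> \<circ> \<tau>)) = fact m / chi id * chi \<tau>"
proof -
  obtain d \<rho> where r: "irrep m d \<rho>" and chi: "\<And>\<sigma>. \<sigma> \<in> perms m \<Longrightarrow> chi \<sigma> = mat_trace d (\<rho> \<sigma>)"
    using irreducible_characterE[OF assms(1)] by blast
  have "chi id = of_nat d"
    using chi[of id] irrep.rep_id[OF r] by (simp add: mat_trace_def mat_one_def)
  then show ?thesis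
    using irrep.trace_rep_convolution[OF r assms(2)] chi assms(2) perms_inv perms_comp by simp
qed

section \<open>The induced matrix in the basis of decomposable symmetrized tensors\<close>

lemma length_compose_perm [simp]: "length (compose_perm \<alpha> \<sigma>) = length \<alpha>"
  by (simp add: compose_perm_def)

lemma nth_compose_perm [simp]: "i < length \<alpha> \<Longrightarrow> compose_perm \<alpha> \<sigma> ! i = \<alpha> ! \<sigma> i"
  by (simp add: compose_perm_def)

lemma compose_perm_in_Gam: "\<alpha> \<in> Gam m n \<Longrightarrow> \<sigma> \<in> perms m \<Longrightarrow> compose_perm \<alpha> \<sigma> \<in> Gam m n"
  unfolding Gam_def by (auto simp: compose_perm_def perms_less)

lemma finite_Gam [simp]: "finite (Gam m n)"
proof -
  have "Gam m n \<subseteq> {xs. set xs \<subseteq> {0..<n} \<and> length xs = m}" by (auto simp: Gam_def)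
  then show ?thesis using finite_lists_length_eq[of "{0..<n}" m] by (auto intro: finite_subset)
qed

lemma compose_perm_eq_iff:
  assumes "length \<beta> = m" "length \<gamma> = m" "\<sigma> \<in> perms m"
  shows "compose_perm \<beta> \<sigma> = \<gamma> \<longleftrightarrow> \<beta> = compose_perm \<gamma> (inv \<sigma>)"
proof
  assume "compose_perm \<beta> \<sigma> = \<gamma>"
  then show "\<beta> = compose_perm \<gamma> (inv \<sigma>)"
    using assms perms_less[OF perms_inv[OF assms(3)]] by (auto simp: perms_inverses intro: nth_equalityI)
next
  assume "\<beta> = compose_perm \<gamma> (inv \<sigma>)"
  then show "compose_perm \<beta> \<sigma> = \<gamma>"
    using assms perms_less[OF assms(3)] by (auto simp: perms_inverses intro: nth_equalityI)
qed

definition Kchi_coeff :: "nat \<Rightarrow> ((nat \<Rightarrow> nat) \<Rightarrow> complex) \<Rightarrow> complex" where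
  "Kchi_coeff m chi = chi id / of_nat (fact m)"

lemma sum_mult_estar:
  assumes \<gamma>: "\<gamma> \<in> Gam m n"
  shows "(\<Sum>\<beta>\<in>Gam m n. f \<beta> * estar m n chi \<gamma> \<beta>)
    = Kchi_coeff m chi * (\<Sum>\<sigma>\<in>perms m. chi \<sigma> * f (compose_perm \<gamma> (inv \<sigma>)))"
proof -
  have "f \<beta> * estar m n chi \<gamma> \<beta>
      = (\<Sum>\<sigma>\<in>perms m. Kchi_coeff m chi * (chi \<sigma> * (if \<beta> = compose_perm \<gamma> (inv \<sigma>) then f \<beta> else 0)))"
    if \<beta>: "\<beta> \<in> Gam m n" for \<beta>
  proof -
    have l: "length \<beta> = m" "length \<gamma> = m" using \<beta> \<gamma> by (auto simp: Gam_def)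
    show ?thesis
      using \<beta> compose_perm_eq_iff[OF l]
      by (simp add: estar_def Kchi_def evec_def Kchi_coeff_def sum_distrib_left ac_simps cong: sum.cong)
         (intro sum.cong refl; simp)
  qed
  then have "(\<Sum>\<beta>\<in>Gam m n. f \<beta> * estar m n chi \<gamma> \<beta>)
      = (\<Sum>\<sigma>\<in>perms m. \<Sum>\<beta>\<in>Gam m n. Kchi_coeff m chi * (chi \<sigma> * (if \<beta> = compose_perm \<gamma> (inv \<sigma>) then f \<beta> else 0)))"
    by (simp cong: sum.cong) (rule sum.swap)
  also have "\<dots> = Kchi_coeff m chi * (\<Sum>\<sigma>\<in>perms m. chi \<sigma> * f (compose_perm \<gamma> (inv \<sigma>)))"
    using compose_perm_in_Gam[OF \<gamma> perms_inv]
    by (simp add: sum_distrib_left[symmetric] sum.delta' cong: sum.cong)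
  finally show ?thesis .
qed

lemma sum_mult_cnj_estar:
  assumes \<gamma>: "\<gamma> \<in> Gam m n"
  shows "(\<Sum>\<beta>\<in>Gam m n. f \<beta> * cnj (estar m n chi \<gamma> \<beta>))
    = cnj (Kchi_coeff m chi) * (\<Sum>\<sigma>\<in>perms m. cnj (chi \<sigma>) * f (compose_perm \<gamma> (inv \<sigma>)))"
  using arg_cong[OF sum_mult_estar[OF \<gamma>, of "\<lambda>\<beta>. cnj (f \<beta>)" chi], of cnj] by (simp add: cnj_sum)

lemma prod_compose_perm_inv:
  assumes "\<sigma> \<in> perms m" "length \<gamma> = m" "length \<delta> = m"
  shows "(\<Prod>i<m. A (compose_perm \<delta> (inv \<sigma>) ! i) (compose_perm \<gamma> (inv \<pi>) ! i))
    = (\<Prod>j<m. A (\<delta> ! j) (\<gamma> ! (inv \<pi> \<circ> \<sigma>) j))"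
proof -
  have "(\<Prod>i<m. A (compose_perm \<delta> (inv \<sigma>) ! i) (compose_perm \<gamma> (inv \<pi>) ! i))
      = (\<Prod>i<m. A (\<delta> ! inv \<sigma> i) (\<gamma> ! inv \<pi> i))"
    using assms by (intro prod.cong refl) simp
  also have "\<dots> = (\<Prod>j<m. A (\<delta> ! inv \<sigma> (\<sigma> j)) (\<gamma> ! inv \<pi> (\<sigma> j)))"
    using prod.permute[of \<sigma> "{..<m}" "\<lambda>i. A (\<delta> ! inv \<sigma> i) (\<gamma> ! inv \<pi> i)"] assms(1)
    by (simp add: perms_def lessThan_atLeast0)
  finally show ?thesis using assms(1) by (simp add: perms_inverses)
qed

lemma sum_perms_inv_comp:
  assumes \<sigma>: "\<sigma> \<in> perms m"
  shows "(\<Sum>\<pi>\<in>perms m. f \<pi> * g (inv \<pi> \<circ> \<sigma>)) = (\<Sum>\<nu>\<in>perms m. f (\<sigma> \<circ> inv \<nu>) * g \<nu>)"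
proof -
  have "(\<Sum>\<pi>\<in>perms m. f \<pi> * g (inv \<pi> \<circ> \<sigma>)) = (\<Sum>\<nu>\<in>perms m. f (\<sigma> \<circ> inv \<nu>) * g (inv (\<sigma> \<circ> inv \<nu>) \<circ> \<sigma>))"
    by (subst sum_perms_comp_left[OF \<sigma>, symmetric], subst sum_perms_inv[symmetric]) (rule refl)
  also have "\<dots> = (\<Sum>\<nu>\<in>perms m. f (\<sigma> \<circ> inv \<nu>) * g \<nu>)"
    using \<sigma> by (intro sum.cong refl)
      (simp add: perms_inv_comp perms_inv perms_inv_inv o_assoc[symmetric] perms_inv_o)
  finally show ?thesis .
qed

text \<open>The orthogonality relation of \<open>\<chi>\<close> collapses the double sum over \<open>S\<^sub>m\<close>
  coming from \<open>e\<^sup>*\<^sub>\<gamma>\<close> and \<open>e\<^sup>*\<^sub>\<delta>\<close> to a single immanant.\<close>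

lemma tinner_tensor_op_estar:
  assumes chi: "irreducible_character m chi" and \<gamma>: "\<gamma> \<in> Gam m n" and \<delta>: "\<delta> \<in> Gam m n"
  shows "tinner m n (tensor_op m n A (estar m n chi \<gamma>)) (estar m n chi \<delta>)
    = Kchi_coeff m chi * imm m (cnjchar chi) (submat A \<delta> \<gamma>)"
proof -
  obtain d where d: "0 < d" "chi id = of_nat d" using irreducible_character_id[OF chi] by blast
  have len: "length \<gamma> = m" "length \<delta> = m" using \<gamma> \<delta> by (auto simp: Gam_def)
  define P where "P \<beta> \<pi> = (\<Prod>i<m. A (\<beta> ! i) (compose_perm \<gamma> (inv \<pi>) ! i))" for \<beta> \<pi>
  define Q where "Q \<nu> = (\<Prod>j<m. A (\<delta> ! j) (\<gamma> ! \<nu> j))" for \<nu>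
  let ?c = "Kchi_coeff m chi"
  have cnj_c: "cnj ?c = ?c" by (simp add: Kchi_coeff_def d)
  have "tinner m n (tensor_op m n A (estar m n chi \<gamma>)) (estar m n chi \<delta>)
      = (\<Sum>\<beta>\<in>Gam m n. (?c * (\<Sum>\<pi>\<in>perms m. chi \<pi> * P \<beta> \<pi>)) * cnj (estar m n chi \<delta> \<beta>))"
    unfolding tinner_def tensor_op_def P_def by (intro sum.cong refl) (simp add: sum_mult_estar[OF \<gamma>])
  also have "\<dots> = cnj ?c * (\<Sum>\<sigma>\<in>perms m. cnj (chi \<sigma>) *
      (?c * (\<Sum>\<pi>\<in>perms m. chi \<pi> * P (compose_perm \<delta> (inv \<sigma>)) \<pi>)))"
    by (rule sum_mult_cnj_estar[OF \<delta>])
  also have "\<dots> = ?c * ?c * (\<Sum>\<sigma>\<in>perms m. cnj (chi \<sigma>) * (\<Sum>\<pi>\<in>perms m. chi \<pi> * Q (inv \<pi> \<circ> \<sigma>)))"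
    using prod_compose_perm_inv[where A=A, OF _ len]
    by (simp add: cnj_c P_def Q_def sum_distrib_left ac_simps cong: sum.cong)
  also have "\<dots> = ?c * ?c * (\<Sum>\<nu>\<in>perms m. (\<Sum>\<sigma>\<in>perms m. chi (inv \<sigma>) * chi (\<sigma> \<circ> inv \<nu>)) * Q \<nu>)"
    by (simp add: sum_perms_inv_comp irreducible_character_inv[OF chi] sum_distrib_left
                  sum_distrib_right ac_simps cong: sum.cong)
       (rule sum.swap)
  also have "\<dots> = ?c * ?c * (\<Sum>\<nu>\<in>perms m. fact m / chi id * cnj (chi \<nu>) * Q \<nu>)"
    using irreducible_character_convolution[OF chi perms_inv] irreducible_character_inv[OF chi]
    by (intro arg_cong[where f="\<lambda>x. ?c * ?c * x"] sum.cong refl) simp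
  also have "\<dots> = ?c * imm m (cnjchar chi) (submat A \<delta> \<gamma>)"
    using d by (simp add: imm_def cnjchar_def Q_def submat_def Kchi_coeff_def sum_distrib_left ac_simps)
  finally show ?thesis .
qed

lemma tensor_op_sum:
  "tensor_op m n A (\<lambda>x. \<Sum>\<gamma>\<in>D. u \<gamma> * f \<gamma> x) = (\<lambda>x. \<Sum>\<gamma>\<in>D. u \<gamma> * tensor_op m n A (f \<gamma>) x)"
proof (rule ext)
  fix x
  have "(\<Sum>\<alpha>\<in>Gam m n. \<Sum>\<gamma>\<in>D. u \<gamma> * ((\<Prod>i<m. A (x ! i) (\<alpha> ! i)) * f \<gamma> \<alpha>))
      = (\<Sum>\<gamma>\<in>D. \<Sum>\<alpha>\<in>Gam m n. u \<gamma> * ((\<Prod>i<m. A (x ! i) (\<alpha> ! i)) * f \<gamma> \<alpha>))"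
    by (rule sum.swap)
  then show "tensor_op m n A (\<lambda>x. \<Sum>\<gamma>\<in>D. u \<gamma> * f \<gamma> x) x = (\<Sum>\<gamma>\<in>D. u \<gamma> * tensor_op m n A (f \<gamma>) x)"
    by (simp add: tensor_op_def sum_distrib_left sum_distrib_right ac_simps)
qed

lemma tinner_sum:
  "tinner m n (\<lambda>x. \<Sum>\<gamma>\<in>D. u \<gamma> * f \<gamma> x) (\<lambda>x. \<Sum>\<delta>\<in>E. v \<delta> * g \<delta> x)
    = (\<Sum>\<gamma>\<in>D. \<Sum>\<delta>\<in>E. u \<gamma> * cnj (v \<delta>) * tinner m n (f \<gamma>) (g \<delta>))"
proof -
  have "tinner m n (\<lambda>x. \<Sum>\<gamma>\<in>D. u \<gamma> * f \<gamma> x) (\<lambda>x. \<Sum>\<delta>\<in>E. v \<delta> * g \<delta> x)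
      = (\<Sum>\<beta>\<in>Gam m n. \<Sum>\<gamma>\<in>D. \<Sum>\<delta>\<in>E. u \<gamma> * cnj (v \<delta>) * (f \<gamma> \<beta> * cnj (g \<delta> \<beta>)))"
    unfolding tinner_def by (simp add: cnj_sum sum_product ac_simps)
  also have "\<dots> = (\<Sum>\<gamma>\<in>D. \<Sum>\<delta>\<in>E. \<Sum>\<beta>\<in>Gam m n. u \<gamma> * cnj (v \<delta>) * (f \<gamma> \<beta> * cnj (g \<delta> \<beta>)))"
    by (subst sum.swap) (intro sum.cong refl, rule sum.swap)
  finally show ?thesis by (simp add: tinner_def sum_distrib_left)
qed

lemma KchiMat_eq:
  assumes chi: "irreducible_character m chi" and D: "D \<subseteq> Gam m n" "\<alpha> \<in> D" "\<beta> \<in> D"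
    and onb: "\<forall>\<alpha>\<in>D. onb m n chi D \<alpha> = (\<lambda>x. \<Sum>\<gamma>\<in>D. B \<gamma> \<alpha> * estar m n chi \<gamma> x)"
  shows "KchiMat m n chi D A \<alpha> \<beta>
    = (\<Sum>\<gamma>\<in>D. \<Sum>\<delta>\<in>D. B \<gamma> \<beta> * cnj (B \<delta> \<alpha>) * (Kchi_coeff m chi * imm m (cnjchar chi) (submat A \<delta> \<gamma>)))"
  unfolding KchiMat_def using onb D
  by (simp add: tensor_op_sum tinner_sum tinner_tensor_op_estar[OF chi] subsetD)

section \<open>Mixed partial derivatives of products of affine functions\<close>

definition inj_lists :: "nat \<Rightarrow> nat \<Rightarrow> nat list set" where
  "inj_lists j m = {f. length f = j \<and> distinct f \<and> set f \<subseteq> {..<m}}"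

lemma finite_inj_lists [simp]: "finite (inj_lists j m)"
proof -
  have "inj_lists j m \<subseteq> {xs. set xs \<subseteq> {..<m} \<and> length xs = j}" by (auto simp: inj_lists_def)
  then show ?thesis using finite_lists_length_eq[of "{..<m}" j] by (auto intro: finite_subset)
qed

lemma inj_lists_0 [simp]: "inj_lists 0 m = {[]}"
  by (auto simp: inj_lists_def)

lemma inj_lists_Suc:
  "inj_lists (Suc j) m = (\<lambda>(f, i). f @ [i]) ` (SIGMA f:inj_lists j m. {..<m} - set f)"
proof
  show "inj_lists (Suc j) m \<subseteq> (\<lambda>(f, i). f @ [i]) ` (SIGMA f:inj_lists j m. {..<m} - set f)"
  proof
    fix g assume g: "g \<in> inj_lists (Suc j) m"
    then obtain f i where fi: "g = f @ [i]" by (cases g rule: rev_cases) (auto simp: inj_lists_def)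
    with g have "(f, i) \<in> (SIGMA f:inj_lists j m. {..<m} - set f)" by (auto simp: inj_lists_def)
    with fi show "g \<in> (\<lambda>(f, i). f @ [i]) ` (SIGMA f:inj_lists j m. {..<m} - set f)" by force
  qed
qed (auto simp: inj_lists_def)

lemma sum_inj_lists_Suc:
  "(\<Sum>g\<in>inj_lists (Suc j) m. h g) = (\<Sum>f\<in>inj_lists j m. \<Sum>i\<in>{..<m} - set f. h (f @ [i]))"
proof -
  have "inj_on (\<lambda>(f, i). f @ [i]) (SIGMA f:inj_lists j m. {..<m} - set f)"
    by (auto simp: inj_on_def)
  then have "(\<Sum>g\<in>inj_lists (Suc j) m. h g) = (\<Sum>(f, i)\<in>(SIGMA f:inj_lists j m. {..<m} - set f). h (f @ [i]))"
    unfolding inj_lists_Suc by (subst sum.reindex) (simp_all add: case_prod_unfold)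
  also have "\<dots> = (\<Sum>f\<in>inj_lists j m. \<Sum>i\<in>{..<m} - set f. h (f @ [i]))"
    by (rule sum.Sigma[symmetric]) auto
  finally show ?thesis .
qed

lemma has_field_derivative_affine_update:
  fixes t x :: "nat \<Rightarrow> complex"
  assumes "J \<in> {1..k}"
  shows "((\<lambda>s. a + (\<Sum>l=1..k. (t(J := s)) l * x l)) has_field_derivative x J) (at z)"
proof -
  have "((\<lambda>s. (t(J := s)) l * x l) has_field_derivative (if l = J then x l else 0)) (at z)" for l
    by (cases "l = J") (auto intro!: derivative_eq_intros)
  then have "((\<lambda>s. a + (\<Sum>l=1..k. (t(J := s)) l * x l))
      has_field_derivative 0 + (\<Sum>l=1..k. if l = J then x l else 0)) (at z)"
    by (intro derivative_intros DERIV_sum)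
  moreover have "(\<Sum>l=1..k. if l = J then x l else 0) = x J"
    using assms by (subst sum.delta) auto
  ultimately show ?thesis by simp
qed

text \<open>Differentiating the product over the positions outside \<open>f\<close> with respect to \<open>t\<^sub>j\<^sub>+\<^sub>1\<close>
  chooses one further position \<open>i\<close>, which extends \<open>f\<close> to the injective list \<open>f @ [i]\<close>.\<close>

lemma sum_inj_lists_extend:
  fixes y :: "nat \<Rightarrow> nat \<Rightarrow> 'a::comm_semiring_1" and L :: "nat \<Rightarrow> 'a"
  shows "(\<Sum>f\<in>inj_lists j m. (\<Prod>l<j. y (Suc l) (f ! l)) *
      (\<Sum>i\<in>{..<m} - set f. y (Suc j) i * (\<Prod>r\<in>({..<m} - set f) - {i}. L r)))
    = (\<Sum>g\<in>inj_lists (Suc j) m. (\<Prod>l<Suc j. y (Suc l) (g ! l)) * (\<Prod>r\<in>{..<m} - set g. L r))"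
  unfolding sum_inj_lists_Suc
proof (intro sum.cong refl)
  fix f assume "f \<in> inj_lists j m"
  then have "length f = j" by (simp add: inj_lists_def)
  then have prod_append: "(\<Prod>l<Suc j. y (Suc l) ((f @ [i]) ! l)) = (\<Prod>l<j. y (Suc l) (f ! l)) * y (Suc j) i" for i
    by (simp add: nth_append)
  have diff_append: "{..<m} - set (f @ [i]) = ({..<m} - set f) - {i}" for i by auto
  show "(\<Prod>l<j. y (Suc l) (f ! l)) * (\<Sum>i\<in>{..<m} - set f. y (Suc j) i * (\<Prod>r\<in>({..<m} - set f) - {i}. L r))
      = (\<Sum>i\<in>{..<m} - set f. (\<Prod>l<Suc j. y (Suc l) ((f @ [i]) ! l)) * (\<Prod>r\<in>{..<m} - set (f @ [i]). L r))"
    unfolding prod_append diff_append by (simp add: sum_distrib_left ac_simps)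
qed

lemma has_field_derivative_sum_prod_affine:
  fixes a :: "'p \<Rightarrow> nat \<Rightarrow> complex" and x :: "'p \<Rightarrow> nat \<Rightarrow> nat \<Rightarrow> complex"
  assumes J: "J \<in> {1..k}"
  defines "L p t i \<equiv> a p i + (\<Sum>l=1..k. t l * x p l i)"
  shows "((\<lambda>s. \<Sum>p\<in>P. w p * (\<Sum>f\<in>F. c p f * (\<Prod>i\<in>S f. L p (t(J := s)) i)))
    has_field_derivative (\<Sum>p\<in>P. w p * (\<Sum>f\<in>F. c p f *
      (\<Sum>i\<in>S f. x p J i * (\<Prod>r\<in>S f - {i}. L p t r))))) (at (t J))"
proof -
  have "((\<lambda>s. L p (t(J := s)) i) has_field_derivative x p J i) (at z)" for p i z
    unfolding L_def by (rule has_field_derivative_affine_update[OF J])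
  then have "((\<lambda>s. \<Prod>i\<in>S f. L p (t(J := s)) i) has_field_derivative
      (\<Sum>i\<in>S f. x p J i * (\<Prod>r\<in>S f - {i}. L p (t(J := t J)) r))) (at (t J))" for p f
    by (rule has_field_derivative_prod)
  then show ?thesis by (simp add: DERIV_sum DERIV_cmult)
qed

lemma mpartial_sum_prod_affine:
  fixes w :: "'p \<Rightarrow> complex" and a :: "'p \<Rightarrow> nat \<Rightarrow> complex" and x :: "'p \<Rightarrow> nat \<Rightarrow> nat \<Rightarrow> complex"
  assumes "j \<le> k"
  shows "mpartial j (\<lambda>t. \<Sum>p\<in>P. w p * (\<Prod>i<m. a p i + (\<Sum>l=1..k. t l * x p l i)))
    = (\<lambda>t. \<Sum>p\<in>P. w p * (\<Sum>f\<in>inj_lists j m. (\<Prod>l<j. x p (Suc l) (f ! l)) *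
                 (\<Prod>i\<in>{..<m} - set f. a p i + (\<Sum>l=1..k. t l * x p l i))))"
  using assms
proof (induction j)
  case (Suc j)
  define L where "L p t i = a p i + (\<Sum>l=1..k. t l * x p l i)" for p t i
  have J: "Suc j \<in> {1..k}" using Suc.prems by simp
  show ?case
  proof (rule ext)
    fix t
    have "mpartial (Suc j) (\<lambda>t. \<Sum>p\<in>P. w p * (\<Prod>i<m. L p t i)) t
        = deriv (\<lambda>s. \<Sum>p\<in>P. w p * (\<Sum>f\<in>inj_lists j m. (\<Prod>l<j. x p (Suc l) (f ! l)) *
            (\<Prod>i\<in>{..<m} - set f. L p (t(Suc j := s)) i))) (t (Suc j))"
      using Suc by (simp add: partial_def L_def)
    also have "\<dots> = (\<Sum>p\<in>P. w p * (\<Sum>f\<in>inj_lists j m. (\<Prod>l<j. x p (Suc l) (f ! l)) *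
        (\<Sum>i\<in>{..<m} - set f. x p (Suc j) i * (\<Prod>r\<in>({..<m} - set f) - {i}. L p t r))))"
      unfolding L_def by (rule DERIV_imp_deriv, rule has_field_derivative_sum_prod_affine[OF J])
    also have "\<dots> = (\<Sum>p\<in>P. w p * (\<Sum>g\<in>inj_lists (Suc j) m. (\<Prod>l<Suc j. x p (Suc l) (g ! l)) *
        (\<Prod>i\<in>{..<m} - set g. L p t i)))"
      by (simp add: sum_inj_lists_extend)
    finally show "mpartial (Suc j) (\<lambda>t. \<Sum>p\<in>P. w p * (\<Prod>i<m. a p i + (\<Sum>l=1..k. t l * x p l i))) t
        = (\<Sum>p\<in>P. w p * (\<Sum>f\<in>inj_lists (Suc j) m. (\<Prod>l<Suc j. x p (Suc l) (f ! l)) *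
            (\<Prod>i\<in>{..<m} - set f. a p i + (\<Sum>l=1..k. t l * x p l i))))"
      by (simp add: L_def)
  qed
qed simp

text \<open>The \<open>\<pi>\<close>-term of the \<open>k\<close>-th polarization of \<open>\<Prod>\<^sub>i A(\<delta>\<^sub>i, \<gamma>\<^sub>\<pi>\<^sub>i)\<close>: the factor in row \<open>f ! l\<close>
  is taken from \<open>X\<^sup>l\<^sup>+\<^sup>1\<close>, all other factors from \<open>A\<close>.\<close>

definition mixed_product :: "nat \<Rightarrow> nat \<Rightarrow> (nat \<Rightarrow> nat \<Rightarrow> complex) \<Rightarrow> (nat \<Rightarrow> nat \<Rightarrow> nat \<Rightarrow> complex) \<Rightarrow>
    nat list \<Rightarrow> nat list \<Rightarrow> (nat \<Rightarrow> nat) \<Rightarrow> nat list \<Rightarrow> complex" where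
  "mixed_product k m A X \<gamma> \<delta> \<pi> f = (\<Prod>l<k. X (Suc l) (\<delta> ! (f ! l)) (\<gamma> ! \<pi> (f ! l))) *
       (\<Prod>i\<in>{..<m} - set f. A (\<delta> ! i) (\<gamma> ! \<pi> i))"

definition mixed_product_sum :: "nat \<Rightarrow> nat \<Rightarrow> (nat \<Rightarrow> nat \<Rightarrow> complex) \<Rightarrow> (nat \<Rightarrow> nat \<Rightarrow> nat \<Rightarrow> complex) \<Rightarrow>
    nat list \<Rightarrow> nat list \<Rightarrow> (nat \<Rightarrow> nat) \<Rightarrow> complex" where
  "mixed_product_sum k m A X \<gamma> \<delta> \<pi> = (\<Sum>f\<in>inj_lists k m. mixed_product k m A X \<gamma> \<delta> \<pi> f)"

lemma sum_cartesian_product3: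
  "(\<Sum>p\<in>(D \<times> E) \<times> S. F p) = (\<Sum>\<gamma>\<in>D. \<Sum>\<delta>\<in>E. \<Sum>\<pi>\<in>S. (F ((\<gamma>, \<delta>), \<pi>) :: 'a::comm_monoid_add))"
proof -
  have "(\<Sum>\<gamma>\<in>D. \<Sum>\<delta>\<in>E. \<Sum>\<pi>\<in>S. F ((\<gamma>,\<delta>),\<pi>)) = (\<Sum>(\<gamma>,\<delta>)\<in>D\<times>E. \<Sum>\<pi>\<in>S. F ((\<gamma>,\<delta>),\<pi>))"
    by (rule sum.cartesian_product)
  also have "\<dots> = (\<Sum>x\<in>D\<times>E. \<Sum>\<pi>\<in>S. F (x,\<pi>))" by (simp only: split_def prod.collapse)
  also have "\<dots> = (\<Sum>(x,\<pi>)\<in>(D\<times>E)\<times>S. F (x,\<pi>))" by (rule sum.cartesian_product)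
  also have "\<dots> = (\<Sum>p\<in>(D\<times>E)\<times>S. F p)" by (simp only: split_def prod.collapse)
  finally show ?thesis by simp
qed

lemma DkKchi_eq_sum:
  assumes chi: "irreducible_character m chi" and D: "D \<subseteq> Gam m n"
    and \<alpha>: "\<alpha> \<in> D" and \<beta>: "\<beta> \<in> D"
    and onb: "\<forall>\<alpha>\<in>D. onb m n chi D \<alpha> = (\<lambda>x. \<Sum>\<gamma>\<in>D. B \<gamma> \<alpha> * estar m n chi \<gamma> x)"
  shows "DkKchi m n chi D k A X \<alpha> \<beta> = (\<Sum>\<gamma>\<in>D. \<Sum>\<delta>\<in>D. B \<gamma> \<beta> * cnj (B \<delta> \<alpha>) * Kchi_coeff m chi *
           (\<Sum>\<pi>\<in>perms m. cnj (chi \<pi>) * mixed_product_sum k m A X \<gamma> \<delta> \<pi>))"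
proof -
  define P where "P = (D \<times> D) \<times> perms m"
  define w where "w p = (case p of ((\<gamma>,\<delta>),\<pi>) \<Rightarrow> B \<gamma> \<beta> * cnj (B \<delta> \<alpha>) * Kchi_coeff m chi * cnj (chi \<pi>))" for p
  define a where "a p i = (case p of ((\<gamma>,\<delta>),\<pi>) \<Rightarrow> A (\<delta> ! i) (\<gamma> ! \<pi> i))" for p i
  define x where "x p l i = (case p of ((\<gamma>,\<delta>),\<pi>) \<Rightarrow> X l (\<delta> ! i) (\<gamma> ! \<pi> i))" for p l i
  have eq: "(\<lambda>t. KchiMat m n chi D (\<lambda>i j. A i j + (\<Sum>l=1..k. t l * X l i j)) \<alpha> \<beta>)
     = (\<lambda>t. \<Sum>p\<in>P. w p * (\<Prod>i<m. a p i + (\<Sum>l=1..k. t l * x p l i)))"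
  proof (rule ext)
    fix t
    show "KchiMat m n chi D (\<lambda>i j. A i j + (\<Sum>l=1..k. t l * X l i j)) \<alpha> \<beta>
       = (\<Sum>p\<in>P. w p * (\<Prod>i<m. a p i + (\<Sum>l=1..k. t l * x p l i)))"
      unfolding KchiMat_eq[OF chi D \<alpha> \<beta> onb] P_def sum_cartesian_product3
      by (simp add: w_def a_def x_def imm_def submat_def cnjchar_def sum_distrib_left ac_simps)
  qed
  have "DkKchi m n chi D k A X \<alpha> \<beta> = (\<Sum>p\<in>P. w p * (\<Sum>f\<in>inj_lists k m. (\<Prod>l<k. x p (Suc l) (f ! l)) *
                 (\<Prod>i\<in>{..<m} - set f. a p i + (\<Sum>l=1..k. 0 * x p l i))))"
    unfolding DkKchi_def eq mpartial_sum_prod_affine[OF le_refl] by simp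
  also have "\<dots> = (\<Sum>\<gamma>\<in>D. \<Sum>\<delta>\<in>D. B \<gamma> \<beta> * cnj (B \<delta> \<alpha>) * Kchi_coeff m chi *
           (\<Sum>\<pi>\<in>perms m. cnj (chi \<pi>) * mixed_product_sum k m A X \<gamma> \<delta> \<pi>))"
    unfolding P_def sum_cartesian_product3
    by (simp add: w_def a_def x_def mixed_product_sum_def mixed_product_def sum_distrib_left ac_simps)
  finally show ?thesis .
qed

section \<open>The mixed immanant expansion\<close>

text \<open>In the term of the mixed immanant that takes row \<open>i\<close> from the \<open>\<sigma> i\<close>-th matrix, the row taken
  from \<open>X\<^sup>l\<^sup>+\<^sup>1\<close> (the matrix number \<open>m - k + l\<close>) is \<open>tail_positions k m \<sigma> ! l\<close>.\<close>

definition tail_positions :: "nat \<Rightarrow> nat \<Rightarrow> (nat \<Rightarrow> nat) \<Rightarrow> nat list" where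
  "tail_positions k m \<sigma> = map (\<lambda>l. inv \<sigma> (m - k + l)) [0..<k]"

lemma length_tail_positions [simp]: "length (tail_positions k m \<sigma>) = k"
  by (simp add: tail_positions_def)

lemma nth_tail_positions: "l < k \<Longrightarrow> tail_positions k m \<sigma> ! l = inv \<sigma> (m - k + l)"
  by (simp add: tail_positions_def)

lemma tail_positions_in_inj_lists:
  assumes "k \<le> m" "\<sigma> \<in> perms m"
  shows "tail_positions k m \<sigma> \<in> inj_lists k m"
proof -
  have inj: "inj (inv \<sigma>)" using perms_inj[OF perms_inv[OF assms(2)]] .
  have "distinct (tail_positions k m \<sigma>)"
    unfolding tail_positions_def distinct_map by (auto simp: inj_on_def dest: injD[OF inj])
  moreover have "set (tail_positions k m \<sigma>) \<subseteq> {..<m}"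
    using assms perms_less[OF perms_inv[OF assms(2)]] by (auto simp: tail_positions_def)
  ultimately show ?thesis by (simp add: inj_lists_def)
qed

lemma mem_tail_positions_iff:
  assumes "k \<le> m" "\<sigma> \<in> perms m" "i < m"
  shows "i \<in> set (tail_positions k m \<sigma>) \<longleftrightarrow> m - k \<le> \<sigma> i"
proof
  assume "i \<in> set (tail_positions k m \<sigma>)"
  then obtain l where "l < k" "i = inv \<sigma> (m - k + l)" by (auto simp: tail_positions_def)
  then show "m - k \<le> \<sigma> i" using assms(2) by (simp add: perms_inverses)
next
  assume "m - k \<le> \<sigma> i"
  moreover have "\<sigma> i < m" using perms_less[OF assms(2,3)] .
  ultimately have "\<sigma> i - (m - k) < k" "tail_positions k m \<sigma> ! (\<sigma> i - (m - k)) = i"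
    using assms by (auto simp: nth_tail_positions perms_inverses)
  then show "i \<in> set (tail_positions k m \<sigma>)" by (metis nth_mem length_tail_positions)
qed

lemma tail_positions_surj:
  assumes km: "k \<le> m" and f: "f \<in> inj_lists k m"
  obtains \<sigma> where "\<sigma> \<in> perms m" "tail_positions k m \<sigma> = f"
proof -
  have sf: "set f \<subseteq> {0..<m}" and df: "distinct f" and lf: "length f = k"
    using f by (auto simp: inj_lists_def)
  define c where "c = filter (\<lambda>i. i \<notin> set f) [0..<m]"
  define L where "L = c @ f"
  have setc: "set c = {0..<m} - set f" and dc: "distinct c" by (auto simp: c_def)
  have lc: "length c = m - k"
    using distinct_card[OF dc] setc card_Diff_subset[OF _ sf] distinct_card[OF df] lf by simp
  have L: "distinct L" "set L = {0..<m}" "length L = m"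
    using dc df setc sf lc lf km by (auto simp: L_def)
  define \<psi> where "\<psi> i = (if i < m then L ! i else i)" for i
  have "bij_betw (nth L) {0..<m} {0..<m}"
    using bij_betw_nth[OF L(1)] L by (simp add: lessThan_atLeast0)
  then have "bij_betw \<psi> {0..<m} {0..<m}"
    by (rule bij_betw_cong[THEN iffD1, rotated]) (simp add: \<psi>_def)
  then have \<psi>: "\<psi> permutes {0..<m}" by (rule bij_imp_permutes) (simp add: \<psi>_def)
  have "tail_positions k m (inv \<psi>) = f"
  proof (rule nth_equalityI)
    fix l assume "l < length (tail_positions k m (inv \<psi>))"
    then have l: "l < k" by simp
    then have "tail_positions k m (inv \<psi>) ! l = L ! (m - k + l)"
      using km by (simp add: nth_tail_positions permutes_inv_inv[OF \<psi>] \<psi>_def)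
    also have "\<dots> = L ! (length c + l)" using lc by simp
    finally show "tail_positions k m (inv \<psi>) ! l = f ! l" by (simp add: L_def)
  qed (simp add: lf)
  moreover have "inv \<psi> \<in> perms m" using \<psi> by (simp add: perms_def permutes_inv)
  ultimately show thesis using that by blast
qed

lemma tail_positions_comp_fixing:
  assumes "\<tau> permutes {0..<m - k}" "\<sigma> \<in> perms m"
  shows "tail_positions k m (\<tau> \<circ> \<sigma>) = tail_positions k m \<sigma>"
proof (rule nth_equalityI)
  have \<tau>: "\<tau> \<in> perms m" using permutes_subset[OF assms(1)] by (auto simp: perms_def)
  fix l assume "l < length (tail_positions k m (\<tau> \<circ> \<sigma>))"
  moreover have "inv \<tau> (m - k + l) = m - k + l"
    using permutes_not_in[OF permutes_inv[OF assms(1)]] by simp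
  ultimately show "tail_positions k m (\<tau> \<circ> \<sigma>) ! l = tail_positions k m \<sigma> ! l"
    by (simp add: nth_tail_positions perms_inv_comp[OF \<tau> assms(2)])
qed simp

lemma tail_positions_eq_imp_fixing:
  assumes km: "k \<le> m" and \<sigma>: "\<sigma> \<in> perms m" and \<sigma>0: "\<sigma>0 \<in> perms m"
    and eq: "tail_positions k m \<sigma> = tail_positions k m \<sigma>0"
  shows "\<sigma> \<circ> inv \<sigma>0 permutes {0..<m - k}"
proof -
  have "(\<sigma> \<circ> inv \<sigma>0) x = x" if x: "x \<notin> {0..<m - k}" for x
  proof (cases "x < m")
    case True
    then have l: "x - (m - k) < k" "m - k + (x - (m - k)) = x" using x km by auto
    then have "inv \<sigma> x = inv \<sigma>0 x"
      using arg_cong[OF eq, of "\<lambda>f. f ! (x - (m - k))"] by (simp add: nth_tail_positions)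
    then show ?thesis using \<sigma> by (metis comp_apply perms_inverses(1))
  next
    case False
    then have "inv \<sigma>0 x = x" "\<sigma> x = x"
      using permutes_not_in[OF permutes_inv[of \<sigma>0 "{0..<m}"]] permutes_not_in[of \<sigma> "{0..<m}"] \<sigma> \<sigma>0
      by (auto simp: perms_def)
    then show ?thesis by simp
  qed
  then show ?thesis
    using perms_comp[OF \<sigma> perms_inv[OF \<sigma>0]] unfolding perms_def permutes_def by blast
qed

lemma card_tail_positions_fiber:
  assumes km: "k \<le> m" and f: "f \<in> inj_lists k m"
  shows "card {\<sigma> \<in> perms m. tail_positions k m \<sigma> = f} = fact (m - k)"
proof -
  obtain \<sigma>0 where \<sigma>0: "\<sigma>0 \<in> perms m" and f_eq: "tail_positions k m \<sigma>0 = f"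
    using tail_positions_surj[OF km f] by blast
  have "{\<sigma> \<in> perms m. tail_positions k m \<sigma> = f} = (\<lambda>\<tau>. \<tau> \<circ> \<sigma>0) ` {\<tau>. \<tau> permutes {0..<m - k}}"
  proof (intro equalityI subsetI)
    fix \<sigma> assume "\<sigma> \<in> {\<sigma> \<in> perms m. tail_positions k m \<sigma> = f}"
    then have "\<sigma> \<circ> inv \<sigma>0 permutes {0..<m - k}" "\<sigma> = (\<sigma> \<circ> inv \<sigma>0) \<circ> \<sigma>0"
      using tail_positions_eq_imp_fixing[OF km _ \<sigma>0] f_eq \<sigma>0
      by (auto simp: o_assoc[symmetric] perms_inv_o)
    then show "\<sigma> \<in> (\<lambda>\<tau>. \<tau> \<circ> \<sigma>0) ` {\<tau>. \<tau> permutes {0..<m - k}}" by blast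
  next
    fix \<sigma> assume "\<sigma> \<in> (\<lambda>\<tau>. \<tau> \<circ> \<sigma>0) ` {\<tau>. \<tau> permutes {0..<m - k}}"
    then obtain \<tau> where \<tau>: "\<tau> permutes {0..<m - k}" "\<sigma> = \<tau> \<circ> \<sigma>0" by blast
    moreover have "\<tau> \<in> perms m" using permutes_subset[OF \<tau>(1)] by (auto simp: perms_def)
    ultimately show "\<sigma> \<in> {\<sigma> \<in> perms m. tail_positions k m \<sigma> = f}"
      using tail_positions_comp_fixing[OF \<tau>(1) \<sigma>0] f_eq perms_comp \<sigma>0 by auto
  qed
  moreover have "inj_on (\<lambda>\<tau>. \<tau> \<circ> \<sigma>0) {\<tau>. \<tau> permutes {0..<m - k}}"
    by (rule inj_onI) (metis \<sigma>0 comp_id o_assoc perms_inv_o(2))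
  ultimately show ?thesis
    using card_permutations[of "{0..<m - k}" "m - k"] by (simp add: card_image)
qed

lemma prod_set_distinct_list:
  assumes "distinct f"
  shows "(\<Prod>i\<in>set f. g i) = (\<Prod>l<length f. g (f ! l))"
proof -
  have "set f = (nth f) ` {..<length f}" by (auto simp: set_conv_nth)
  moreover have "inj_on (nth f) {..<length f}" using assms by (simp add: inj_on_nth)
  ultimately show ?thesis by (simp add: prod.reindex)
qed

definition stacked_submat :: "nat \<Rightarrow> nat \<Rightarrow> (nat \<Rightarrow> nat \<Rightarrow> complex) \<Rightarrow> (nat \<Rightarrow> nat \<Rightarrow> nat \<Rightarrow> complex) \<Rightarrow>
    nat list \<Rightarrow> nat list \<Rightarrow> nat \<Rightarrow> nat \<Rightarrow> nat \<Rightarrow> complex" where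
  "stacked_submat k m A X \<gamma> \<delta> s i j =
     (if s < m - k then A (\<delta> ! i) (\<gamma> ! j) else X (s - (m - k) + 1) (\<delta> ! i) (\<gamma> ! j))"

lemma prod_stacked_submat:
  assumes "k \<le> m" "\<sigma> \<in> perms m"
  shows "(\<Prod>i<m. stacked_submat k m A X \<gamma> \<delta> (\<sigma> i) i (\<pi> i))
    = mixed_product k m A X \<gamma> \<delta> \<pi> (tail_positions k m \<sigma>)"
proof -
  let ?f = "tail_positions k m \<sigma>" and ?Y = "\<lambda>i. stacked_submat k m A X \<gamma> \<delta> (\<sigma> i) i (\<pi> i)"
  have sub: "set ?f \<subseteq> {..<m}" and dist: "distinct ?f"
    using tail_positions_in_inj_lists[OF assms] by (auto simp: inj_lists_def)
  have "(\<Prod>i<m. ?Y i) = (\<Prod>i\<in>{..<m} - set ?f. ?Y i) * (\<Prod>i\<in>set ?f. ?Y i)"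
    by (rule prod.subset_diff[OF sub]) simp
  also have "(\<Prod>i\<in>set ?f. ?Y i) = (\<Prod>l<k. ?Y (?f ! l))"
    using prod_set_distinct_list[OF dist] by simp
  also have "(\<Prod>i\<in>{..<m} - set ?f. ?Y i) = (\<Prod>i\<in>{..<m} - set ?f. A (\<delta> ! i) (\<gamma> ! \<pi> i))"
    using mem_tail_positions_iff[OF assms] by (intro prod.cong refl) (auto simp: stacked_submat_def)
  also have "(\<Prod>l<k. ?Y (?f ! l)) = (\<Prod>l<k. X (Suc l) (\<delta> ! (?f ! l)) (\<gamma> ! \<pi> (?f ! l)))"
    using assms(2) by (intro prod.cong refl) (simp add: nth_tail_positions perms_inverses stacked_submat_def)
  finally show ?thesis by (simp add: mixed_product_def mult.commute)
qed

lemma sum_perms_prod_stacked_submat: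
  assumes km: "k \<le> m"
  shows "(\<Sum>\<sigma>\<in>perms m. \<Prod>i<m. stacked_submat k m A X \<gamma> \<delta> (\<sigma> i) i (\<pi> i))
    = fact (m - k) * mixed_product_sum k m A X \<gamma> \<delta> \<pi>"
proof -
  let ?P = "mixed_product k m A X \<gamma> \<delta> \<pi>"
  have "(\<Sum>\<sigma>\<in>perms m. \<Prod>i<m. stacked_submat k m A X \<gamma> \<delta> (\<sigma> i) i (\<pi> i))
      = (\<Sum>\<sigma>\<in>perms m. ?P (tail_positions k m \<sigma>))"
    by (intro sum.cong refl) (simp add: prod_stacked_submat km)
  also have "\<dots> = (\<Sum>f\<in>inj_lists k m. \<Sum>\<sigma>\<in>{\<sigma> \<in> perms m. tail_positions k m \<sigma> = f}. ?P (tail_positions k m \<sigma>))"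
    by (rule sum.group[symmetric]) (auto simp: tail_positions_in_inj_lists km)
  also have "\<dots> = (\<Sum>f\<in>inj_lists k m. of_nat (fact (m - k)) * ?P f)"
    using card_tail_positions_fiber[OF km] by (intro sum.cong refl) simp
  finally show ?thesis by (simp add: mixed_product_sum_def sum_distrib_left)
qed

lemma miximm_eq_mixed_product_sum:
  assumes km: "k \<le> m"
  shows "miximm m (cnjchar chi) k A X \<delta> \<gamma>
    = fact (m - k) / fact m * (\<Sum>\<pi>\<in>perms m. cnj (chi \<pi>) * mixed_product_sum k m A X \<gamma> \<delta> \<pi>)"
proof -
  let ?Y = "stacked_submat k m A X \<gamma> \<delta>"
  have "(\<Sum>\<sigma>\<in>perms m. \<Prod>i<m. ?Y (\<sigma> (\<pi> i)) i (\<pi> i)) = fact (m - k) * mixed_product_sum k m A X \<gamma> \<delta> \<pi>"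
    if \<pi>: "\<pi> \<in> perms m" for \<pi>
    using sum_perms_comp_right[OF \<pi>, where g="\<lambda>\<sigma>. \<Prod>i<m. ?Y (\<sigma> i) i (\<pi> i)"]
      sum_perms_prod_stacked_submat[OF km] by simp
  then have "(\<Sum>\<sigma>\<in>perms m. \<Sum>\<pi>\<in>perms m. cnj (chi \<pi>) * (\<Prod>i<m. ?Y (\<sigma> (\<pi> i)) i (\<pi> i)))
      = (\<Sum>\<pi>\<in>perms m. cnj (chi \<pi>) * (fact (m - k) * mixed_product_sum k m A X \<gamma> \<delta> \<pi>))"
    by (subst sum.swap) (simp add: sum_distrib_left[symmetric])
  then show ?thesis
    by (simp add: miximm_def mix_imm_def imm_def cnjchar_def submat_def stacked_submat_def
                  sum_divide_distrib sum_distrib_left ac_simps if_distrib[of "\<lambda>M. M _ _"] cong: if_cong)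
qed

section \<open>The block direct sum expansion\<close>

lemma idx_nth:
  assumes "distinct xs" "p < length xs"
  shows "idx xs (xs ! p) = p"
  unfolding idx_def
proof (rule the_equality)
  fix q assume "q < length xs \<and> xs ! q = xs ! p"
  then show "q = p" using assms nth_eq_iff_index_eq by blast
qed (use assms in simp)

lemma idx_in_set:
  assumes "distinct xs" "x \<in> set xs"
  shows "idx xs x < length xs" "xs ! idx xs x = x"
proof -
  obtain p where "p < length xs" "xs ! p = x" using assms(2) by (auto simp: in_set_conv_nth)
  then show "idx xs x < length xs" "xs ! idx xs x = x" using idx_nth[OF assms(1)] by auto
qed

lemma Qkm_D:
  assumes "\<rho> \<in> Qkm k m"
  shows "distinct \<rho>" "length \<rho> = k" "set \<rho> \<subseteq> {0..<m}" "sorted_wrt (<) \<rho>"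
  using assms by (auto simp: Qkm_def strict_sorted_iff)

lemma finite_Qkm [simp]: "finite (Qkm k m)"
proof -
  have "Qkm k m \<subseteq> {xs. set xs \<subseteq> {0..<m} \<and> length xs = k}" by (auto simp: Qkm_def)
  then show ?thesis using finite_lists_length_eq[of "{0..<m}" k] by (auto intro: finite_subset)
qed

lemma distinct_compl: "distinct (compl m \<rho>)"
  by (simp add: compl_def)

lemma set_compl: "set (compl m \<rho>) = {0..<m} - set \<rho>"
  by (auto simp: compl_def)

lemma blockdsum_Xst_cominor:
  assumes \<rho>: "\<rho> \<in> Qkm k m" and \<tau>: "\<tau> \<in> Qkm k m" and "i < m" "j < m"
  shows "blockdsum m (subsq (Xst X \<delta> \<gamma> \<sigma> \<tau>) \<rho> \<tau>) (cominor m (submat A \<delta> \<gamma>) \<rho> \<tau>) \<rho> \<tau> i j =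
    (if i \<in> set \<rho> \<and> j \<in> set \<tau> then X (\<sigma> (idx \<tau> j) + 1) (\<delta> ! i) (\<gamma> ! j)
     else if i \<notin> set \<rho> \<and> j \<notin> set \<tau> then A (\<delta> ! i) (\<gamma> ! j) else 0)"
proof -
  have "distinct \<rho>" "distinct \<tau>" using Qkm_D \<rho> \<tau> by auto
  moreover have "i \<notin> set \<rho> \<Longrightarrow> i \<in> set (compl m \<rho>)" "j \<notin> set \<tau> \<Longrightarrow> j \<in> set (compl m \<tau>)"
    using assms by (auto simp: set_compl)
  ultimately show ?thesis
    using idx_in_set[of \<rho> i] idx_in_set[of \<tau> j] idx_in_set[OF distinct_compl, of i m \<rho>]
      idx_in_set[OF distinct_compl, of j m \<tau>]
    by (auto simp: blockdsum_def subsq_def Xst_def submat_def cominor_def)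
qed

text \<open>For fixed \<open>\<pi>\<close> and \<open>\<tau>\<close>, the only row set \<open>\<rho>\<close> for which the \<open>\<pi>\<close>-term of the block direct sum
  avoids the zero blocks is the preimage of \<open>\<tau>\<close> under \<open>\<pi>\<close>.\<close>

lemma sorted_preimage_in_Qkm:
  assumes \<pi>: "\<pi> \<in> perms m" and \<tau>: "\<tau> \<in> Qkm k m"
  shows "sorted_list_of_set {i \<in> {..<m}. \<pi> i \<in> set \<tau>} \<in> Qkm k m"
proof -
  let ?S = "{i \<in> {..<m}. \<pi> i \<in> set \<tau>}"
  have "\<pi> ` ?S = set \<tau>"
  proof
    show "set \<tau> \<subseteq> \<pi> ` ?S"
    proof
      fix j assume j: "j \<in> set \<tau>"
      then have "inv \<pi> j \<in> ?S"
        using Qkm_D(3)[OF \<tau>] perms_less[OF perms_inv[OF \<pi>]] perms_inverses[OF \<pi>] by auto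
      then show "j \<in> \<pi> ` ?S" using perms_inverses(1)[OF \<pi>] by (metis image_eqI)
    qed
  qed auto
  then have "card ?S = k"
    using card_image[OF inj_on_subset[OF perms_inj[OF \<pi>]]] distinct_card[OF Qkm_D(1)[OF \<tau>]] Qkm_D(2)[OF \<tau>]
    by (metis subset_UNIV)
  then show ?thesis by (auto simp: Qkm_def)
qed

lemma prod_blockdsum_eq_0:
  assumes \<pi>: "\<pi> \<in> perms m" and \<rho>: "\<rho> \<in> Qkm k m" and \<tau>: "\<tau> \<in> Qkm k m"
    and ne: "set \<rho> \<noteq> {i \<in> {..<m}. \<pi> i \<in> set \<tau>}"
  shows "(\<Prod>i<m. blockdsum m (subsq (Xst X \<delta> \<gamma> \<sigma> \<tau>) \<rho> \<tau>) (cominor m (submat A \<delta> \<gamma>) \<rho> \<tau>) \<rho> \<tau> i (\<pi> i)) = 0"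
proof -
  have "set \<rho> \<subseteq> {..<m}" using Qkm_D(3)[OF \<rho>] by auto
  with ne obtain i where i: "i < m" "i \<in> set \<rho> \<longleftrightarrow> \<pi> i \<notin> set \<tau>" by blast
  then have "blockdsum m (subsq (Xst X \<delta> \<gamma> \<sigma> \<tau>) \<rho> \<tau>) (cominor m (submat A \<delta> \<gamma>) \<rho> \<tau>) \<rho> \<tau> i (\<pi> i) = 0"
    using perms_less[OF \<pi> i(1)] by (auto simp: blockdsum_Xst_cominor[OF \<rho> \<tau>])
  then show ?thesis using i(1) by (intro prod_zero) auto
qed

definition placed_product :: "nat \<Rightarrow> (nat \<Rightarrow> nat \<Rightarrow> complex) \<Rightarrow> (nat \<Rightarrow> nat \<Rightarrow> nat \<Rightarrow> complex) \<Rightarrow>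
    nat list \<Rightarrow> nat list \<Rightarrow> (nat \<Rightarrow> nat) \<Rightarrow> (nat \<Rightarrow> nat) \<Rightarrow> nat list \<Rightarrow> complex" where
  "placed_product m A X \<gamma> \<delta> \<pi> \<sigma> \<tau> = (\<Prod>i<m.
     if \<pi> i \<in> set \<tau> then X (\<sigma> (idx \<tau> (\<pi> i)) + 1) (\<delta> ! i) (\<gamma> ! \<pi> i) else A (\<delta> ! i) (\<gamma> ! \<pi> i))"

lemma sum_Qkm_prod_blockdsum:
  assumes \<pi>: "\<pi> \<in> perms m" and \<tau>: "\<tau> \<in> Qkm k m"
  shows "(\<Sum>\<rho>\<in>Qkm k m. \<Prod>i<m.
      blockdsum m (subsq (Xst X \<delta> \<gamma> \<sigma> \<tau>) \<rho> \<tau>) (cominor m (submat A \<delta> \<gamma>) \<rho> \<tau>) \<rho> \<tau> i (\<pi> i))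
    = placed_product m A X \<gamma> \<delta> \<pi> \<sigma> \<tau>"
proof -
  define \<rho>0 where "\<rho>0 = sorted_list_of_set {i \<in> {..<m}. \<pi> i \<in> set \<tau>}"
  have \<rho>0: "\<rho>0 \<in> Qkm k m" "set \<rho>0 = {i \<in> {..<m}. \<pi> i \<in> set \<tau>}"
    using sorted_preimage_in_Qkm[OF \<pi> \<tau>] by (simp_all add: \<rho>0_def)
  have "(\<Prod>i<m. blockdsum m (subsq (Xst X \<delta> \<gamma> \<sigma> \<tau>) \<rho> \<tau>) (cominor m (submat A \<delta> \<gamma>) \<rho> \<tau>) \<rho> \<tau> i (\<pi> i))
      = (if \<rho> = \<rho>0 then placed_product m A X \<gamma> \<delta> \<pi> \<sigma> \<tau> else 0)" if \<rho>: "\<rho> \<in> Qkm k m" for \<rho>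
  proof (cases "\<rho> = \<rho>0")
    case True
    have "(\<Prod>i<m. blockdsum m (subsq (Xst X \<delta> \<gamma> \<sigma> \<tau>) \<rho>0 \<tau>) (cominor m (submat A \<delta> \<gamma>) \<rho>0 \<tau>) \<rho>0 \<tau> i (\<pi> i))
        = placed_product m A X \<gamma> \<delta> \<pi> \<sigma> \<tau>"
      unfolding placed_product_def using perms_less[OF \<pi>]
      by (intro prod.cong refl) (auto simp: blockdsum_Xst_cominor[OF \<rho>0(1) \<tau>] \<rho>0(2))
    then show ?thesis using True by simp
  next
    case False
    then have "set \<rho> \<noteq> set \<rho>0"
      using strict_sorted_equal[of \<rho>0 \<rho>] Qkm_D[OF \<rho>] Qkm_D[OF \<rho>0(1)] by auto
    then show ?thesis using prod_blockdsum_eq_0[OF \<pi> \<rho> \<tau>] \<rho>0(2) False by simp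
  qed
  then show ?thesis using \<rho>0(1) by (simp add: sum.delta' cong: sum.cong)
qed

text \<open>\<open>reorder k \<sigma> \<tau>\<close> is the list \<open>\<tau> \<circ> \<sigma>\<^sup>-\<^sup>1\<close>. Every injective list arises exactly once in this way
  from a permutation \<open>\<sigma> \<in> S\<^sub>k\<close> and an increasing list \<open>\<tau> \<in> Q\<^sub>k\<^sub>,\<^sub>m\<close> (its sorted version), which
  turns the sum over \<open>\<sigma>\<close> and \<open>\<tau>\<close> into the sum over injective lists.\<close>

definition reorder :: "nat \<Rightarrow> (nat \<Rightarrow> nat) \<Rightarrow> nat list \<Rightarrow> nat list" where
  "reorder k \<sigma> \<tau> = map (\<lambda>l. \<tau> ! (inv \<sigma> l)) [0..<k]"

lemma length_reorder [simp]: "length (reorder k \<sigma> \<tau>) = k"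
  by (simp add: reorder_def)

lemma nth_reorder: "l < k \<Longrightarrow> reorder k \<sigma> \<tau> ! l = \<tau> ! (inv \<sigma> l)"
  by (simp add: reorder_def)

lemma reorder_props:
  assumes \<sigma>: "\<sigma> \<in> perms k" and \<tau>: "\<tau> \<in> Qkm k m"
  shows "set (reorder k \<sigma> \<tau>) = set \<tau>" "distinct (reorder k \<sigma> \<tau>)" "reorder k \<sigma> \<tau> \<in> inj_lists k m"
proof -
  have d\<tau>: "distinct \<tau>" and l\<tau>: "length \<tau> = k" and s\<tau>: "set \<tau> \<subseteq> {0..<m}" using Qkm_D[OF \<tau>] by auto
  have pinv: "inv \<sigma> permutes {0..<k}" using \<sigma> by (simp add: perms_def permutes_inv)
  have "set (reorder k \<sigma> \<tau>) = (nth \<tau>) ` (inv \<sigma> ` {0..<k})" by (auto simp: reorder_def)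
  also have "inv \<sigma> ` {0..<k} = {0..<k}" by (rule permutes_image[OF pinv])
  also have "(nth \<tau>) ` {0..<k} = set \<tau>" using l\<tau> by (auto simp: set_conv_nth)
  finally show st: "set (reorder k \<sigma> \<tau>) = set \<tau>" .
  have "card (set (reorder k \<sigma> \<tau>)) = length (reorder k \<sigma> \<tau>)" using st distinct_card[OF d\<tau>] l\<tau> by simp
  then show dP: "distinct (reorder k \<sigma> \<tau>)" by (simp add: card_distinct)
  show "reorder k \<sigma> \<tau> \<in> inj_lists k m" using dP st s\<tau> by (auto simp: inj_lists_def)
qed

lemma map_perms_in_inj_lists:
  assumes \<pi>: "\<pi> \<in> perms m" and g: "g \<in> inj_lists k m"
  shows "map \<pi> g \<in> inj_lists k m"
  using g perms_less[OF \<pi>] inj_on_subset[OF perms_inj[OF \<pi>]]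
  by (auto simp: inj_lists_def distinct_map)

lemma bij_betw_map_inv_inj_lists:
  assumes \<pi>: "\<pi> \<in> perms m"
  shows "bij_betw (map (inv \<pi>)) (inj_lists k m) (inj_lists k m)"
  by (rule bij_betw_byWitness[where f'="map \<pi>"])
     (use \<pi> perms_inv map_perms_in_inj_lists in \<open>auto simp: perms_inverses comp_def\<close>)

lemma placed_product_eq_mixed_product:
  assumes \<pi>: "\<pi> \<in> perms m" and \<sigma>: "\<sigma> \<in> perms k" and \<tau>: "\<tau> \<in> Qkm k m"
  shows "placed_product m A X \<gamma> \<delta> \<pi> \<sigma> \<tau> = mixed_product k m A X \<gamma> \<delta> \<pi> (map (inv \<pi>) (reorder k \<sigma> \<tau>))"
proof -
  define f where "f = map (inv \<pi>) (reorder k \<sigma> \<tau>)"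
  have "f \<in> inj_lists k m"
    unfolding f_def by (rule map_perms_in_inj_lists[OF perms_inv[OF \<pi>] reorder_props(3)[OF \<sigma> \<tau>]])
  then have df: "distinct f" and sf: "set f \<subseteq> {..<m}" and lf: "length f = k" by (auto simp: inj_lists_def)
  have d\<tau>: "distinct \<tau>" and l\<tau>: "length \<tau> = k" using Qkm_D[OF \<tau>] by auto
  have setf: "set f = inv \<pi> ` set \<tau>" using reorder_props(1)[OF \<sigma> \<tau>] by (simp add: f_def)
  define g where "g i = (if \<pi> i \<in> set \<tau> then X (\<sigma> (idx \<tau> (\<pi> i)) + 1) (\<delta> ! i) (\<gamma> ! \<pi> i) else A (\<delta> ! i) (\<gamma> ! \<pi> i))" for i
  have "placed_product m A X \<gamma> \<delta> \<pi> \<sigma> \<tau> = (\<Prod>i<m. g i)" by (simp add: placed_product_def g_def)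
  also have "\<dots> = (\<Prod>i\<in>{..<m} - set f. g i) * (\<Prod>i\<in>set f. g i)"
    by (rule prod.subset_diff[OF sf]) simp
  also have "(\<Prod>i\<in>{..<m} - set f. g i) = (\<Prod>i\<in>{..<m} - set f. A (\<delta> ! i) (\<gamma> ! \<pi> i))"
  proof (intro prod.cong refl)
    fix i assume "i \<in> {..<m} - set f"
    then have "\<pi> i \<notin> set \<tau>" using setf perms_inverses(2)[OF \<pi>] by (metis DiffD2 image_eqI)
    then show "g i = A (\<delta> ! i) (\<gamma> ! \<pi> i)" by (simp add: g_def)
  qed
  also have "(\<Prod>i\<in>set f. g i) = (\<Prod>l<k. g (f ! l))" using prod_set_distinct_list[OF df] lf by simp
  also have "\<dots> = (\<Prod>l<k. X (Suc l) (\<delta> ! (f ! l)) (\<gamma> ! \<pi> (f ! l)))"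
  proof (intro prod.cong refl)
    fix l assume "l \<in> {..<k}"
    then have l: "l < k" by simp
    have il: "inv \<sigma> l < k" using perms_less[OF perms_inv[OF \<sigma>] l] .
    have pf: "\<pi> (f ! l) = \<tau> ! (inv \<sigma> l)" using l \<pi> by (simp add: f_def nth_reorder perms_inverses)
    have "\<tau> ! (inv \<sigma> l) \<in> set \<tau>" using il l\<tau> by simp
    moreover have "idx \<tau> (\<tau> ! (inv \<sigma> l)) = inv \<sigma> l" using idx_nth[OF d\<tau>] il l\<tau> by simp
    ultimately show "g (f ! l) = X (Suc l) (\<delta> ! (f ! l)) (\<gamma> ! \<pi> (f ! l))"
      using \<sigma> by (simp add: g_def pf perms_inverses)
  qed
  finally show ?thesis by (simp add: mixed_product_def f_def mult.commute)
qed

definition sort_rank :: "nat \<Rightarrow> nat list \<Rightarrow> nat \<Rightarrow> nat" where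
  "sort_rank k g = (\<lambda>l. if l < k then idx (sorted_list_of_set (set g)) (g ! l) else l)"

definition reorder_inv :: "nat \<Rightarrow> nat list \<Rightarrow> (nat \<Rightarrow> nat) \<times> nat list" where
  "reorder_inv k g = (inv (sort_rank k g), sorted_list_of_set (set g))"

lemma sorted_set_inj_lists:
  assumes g: "g \<in> inj_lists k m"
  shows "sorted_list_of_set (set g) \<in> Qkm k m" "set (sorted_list_of_set (set g)) = set g"
    "distinct (sorted_list_of_set (set g))" "length (sorted_list_of_set (set g)) = k"
proof -
  have dg: "distinct g" and lg: "length g = k" and sg: "set g \<subseteq> {..<m}" using g by (auto simp: inj_lists_def)
  show ss: "set (sorted_list_of_set (set g)) = set g" by simp
  show "distinct (sorted_list_of_set (set g))" by simp
  show ls: "length (sorted_list_of_set (set g)) = k" using distinct_card[OF dg] lg by simp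
  show "sorted_list_of_set (set g) \<in> Qkm k m" using ss ls sg by (auto simp: Qkm_def)
qed

lemma sort_rank_permutes:
  assumes g: "g \<in> inj_lists k m"
  shows "sort_rank k g permutes {0..<k}"
proof -
  let ?t = "sorted_list_of_set (set g)"
  have dg: "distinct g" and lg: "length g = k" using g by (auto simp: inj_lists_def)
  have dt: "distinct ?t" and lt: "length ?t = k" and st: "set ?t = set g" using sorted_set_inj_lists[OF g] by auto
  have inmem: "g ! l \<in> set ?t" if "l < k" for l using that lg st by simp
  have maps: "sort_rank k g ` {0..<k} \<subseteq> {0..<k}"
    using idx_in_set(1)[OF dt inmem] lt by (auto simp: sort_rank_def)
  have inj: "inj_on (sort_rank k g) {0..<k}"
  proof (rule inj_onI)
    fix a b assume a: "a \<in> {0..<k}" and b: "b \<in> {0..<k}" and e: "sort_rank k g a = sort_rank k g b"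
    have "g ! a = ?t ! idx ?t (g ! a)" using idx_in_set(2)[OF dt inmem] a by simp
    also have "\<dots> = ?t ! idx ?t (g ! b)" using e a b by (simp add: sort_rank_def)
    also have "\<dots> = g ! b" using idx_in_set(2)[OF dt inmem] b by simp
    finally show "a = b" using dg a b lg nth_eq_iff_index_eq by auto
  qed
  have "sort_rank k g ` {0..<k} = {0..<k}" by (rule endo_inj_surj[OF _ maps inj]) simp
  then have "bij_betw (sort_rank k g) {0..<k} {0..<k}" using inj by (simp add: bij_betw_def)
  then show ?thesis by (rule bij_imp_permutes) (simp add: sort_rank_def)
qed

lemma reorder_inv_reorder:
  assumes \<sigma>: "\<sigma> \<in> perms k" and \<tau>: "\<tau> \<in> Qkm k m"
  shows "reorder_inv k (reorder k \<sigma> \<tau>) = (\<sigma>, \<tau>)"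
proof -
  have st: "set (reorder k \<sigma> \<tau>) = set \<tau>" using reorder_props(1)[OF \<sigma> \<tau>] .
  have d\<tau>: "distinct \<tau>" and l\<tau>: "length \<tau> = k" using Qkm_D[OF \<tau>] by auto
  have sl: "sorted_list_of_set (set \<tau>) = \<tau>"
    using strict_sorted_equal[of \<tau> "sorted_list_of_set (set \<tau>)"] Qkm_D(4)[OF \<tau>] by simp
  have "sort_rank k (reorder k \<sigma> \<tau>) l = inv \<sigma> l" for l
  proof (cases "l < k")
    case True
    then have "inv \<sigma> l < k" using perms_less[OF perms_inv[OF \<sigma>]] by blast
    then show ?thesis using True l\<tau> by (simp add: sort_rank_def st sl nth_reorder idx_nth[OF d\<tau>])
  next
    case False
    then have "inv \<sigma> l = l"
      using permutes_not_in[of "inv \<sigma>" "{0..<k}" l] \<sigma> by (auto simp: perms_def permutes_inv)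
    then show ?thesis using False by (simp add: sort_rank_def)
  qed
  then have "sort_rank k (reorder k \<sigma> \<tau>) = inv \<sigma>" by blast
  then show ?thesis using \<sigma> by (simp add: reorder_inv_def st sl perms_inv_inv)
qed

lemma reorder_reorder_inv:
  assumes g: "g \<in> inj_lists k m"
  shows "case_prod (reorder k) (reorder_inv k g) = g"
proof -
  let ?t = "sorted_list_of_set (set g)"
  have dt: "distinct ?t" and st: "set ?t = set g" and lg: "length g = k"
    using sorted_set_inj_lists[OF g] g by (auto simp: inj_lists_def)
  have "reorder k (inv (sort_rank k g)) ?t = g"
  proof (rule nth_equalityI)
    fix l assume "l < length (reorder k (inv (sort_rank k g)) ?t)"
    then have l: "l < k" by simp
    then have "g ! l \<in> set ?t" using lg st by simp
    then show "reorder k (inv (sort_rank k g)) ?t ! l = g ! l"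
      using l sort_rank_permutes[OF g] idx_in_set(2)[OF dt]
      by (simp add: nth_reorder permutes_inv_inv sort_rank_def)
  qed (simp add: lg)
  then show ?thesis by (simp add: reorder_inv_def)
qed

lemma bij_betw_reorder: "bij_betw (case_prod (reorder k)) (perms k \<times> Qkm k m) (inj_lists k m)"
  by (rule bij_betw_byWitness[where f'="reorder_inv k"])
     (use reorder_inv_reorder reorder_reorder_inv reorder_props(3) sorted_set_inj_lists(1)
        sort_rank_permutes in \<open>auto simp: reorder_inv_def perms_def permutes_inv\<close>)

lemma sum_perms_Qkm_placed_product:
  assumes \<pi>: "\<pi> \<in> perms m"
  shows "(\<Sum>\<sigma>\<in>perms k. \<Sum>\<tau>\<in>Qkm k m. placed_product m A X \<gamma> \<delta> \<pi> \<sigma> \<tau>) = mixed_product_sum k m A X \<gamma> \<delta> \<pi>"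
proof -
  let ?H = "\<lambda>g. mixed_product k m A X \<gamma> \<delta> \<pi> (map (inv \<pi>) g)"
  have "(\<Sum>\<sigma>\<in>perms k. \<Sum>\<tau>\<in>Qkm k m. placed_product m A X \<gamma> \<delta> \<pi> \<sigma> \<tau>) = (\<Sum>\<sigma>\<in>perms k. \<Sum>\<tau>\<in>Qkm k m. ?H (reorder k \<sigma> \<tau>))"
    by (intro sum.cong refl) (simp add: placed_product_eq_mixed_product[OF \<pi>])
  also have "\<dots> = (\<Sum>(\<sigma>,\<tau>)\<in>perms k \<times> Qkm k m. ?H (reorder k \<sigma> \<tau>))" by (rule sum.cartesian_product)
  also have "\<dots> = (\<Sum>x\<in>perms k \<times> Qkm k m. ?H (case_prod (reorder k) x))" by (simp add: case_prod_beta)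
  also have "\<dots> = (\<Sum>g\<in>inj_lists k m. ?H g)" by (rule sum.reindex_bij_betw[OF bij_betw_reorder])
  also have "\<dots> = (\<Sum>f\<in>inj_lists k m. mixed_product k m A X \<gamma> \<delta> \<pi> f)" by (rule sum.reindex_bij_betw[OF bij_betw_map_inv_inj_lists[OF \<pi>]])
  also have "\<dots> = mixed_product_sum k m A X \<gamma> \<delta> \<pi>" by (simp add: mixed_product_sum_def)
  finally show ?thesis .
qed

lemma sum_blockdsum_imm_eq:
  "(\<Sum>\<sigma>\<in>perms k. \<Sum>\<rho>\<in>Qkm k m. \<Sum>\<tau>\<in>Qkm k m.
      imm m (cnjchar chi) (blockdsum m (subsq (Xst X \<delta> \<gamma> \<sigma> \<tau>) \<rho> \<tau>) (cominor m (submat A \<delta> \<gamma>) \<rho> \<tau>) \<rho> \<tau>))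
   = (\<Sum>\<pi>\<in>perms m. cnj (chi \<pi>) * mixed_product_sum k m A X \<gamma> \<delta> \<pi>)"
proof -
  let ?BD = "\<lambda>\<sigma> \<rho> \<tau>. blockdsum m (subsq (Xst X \<delta> \<gamma> \<sigma> \<tau>) \<rho> \<tau>) (cominor m (submat A \<delta> \<gamma>) \<rho> \<tau>) \<rho> \<tau>"
  have "(\<Sum>\<sigma>\<in>perms k. \<Sum>\<rho>\<in>Qkm k m. \<Sum>\<tau>\<in>Qkm k m. imm m (cnjchar chi) (?BD \<sigma> \<rho> \<tau>))
     = (\<Sum>\<sigma>\<in>perms k. \<Sum>\<rho>\<in>Qkm k m. \<Sum>\<tau>\<in>Qkm k m. \<Sum>\<pi>\<in>perms m. cnj (chi \<pi>) * (\<Prod>i<m. ?BD \<sigma> \<rho> \<tau> i (\<pi> i)))"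
    by (simp add: imm_def cnjchar_def)
  also have "\<dots> = (\<Sum>\<pi>\<in>perms m. \<Sum>\<sigma>\<in>perms k. \<Sum>\<rho>\<in>Qkm k m. \<Sum>\<tau>\<in>Qkm k m. cnj (chi \<pi>) * (\<Prod>i<m. ?BD \<sigma> \<rho> \<tau> i (\<pi> i)))"
    by (rule sum_swap_1_3[symmetric])
  also have "\<dots> = (\<Sum>\<pi>\<in>perms m. cnj (chi \<pi>) * mixed_product_sum k m A X \<gamma> \<delta> \<pi>)"
  proof (intro sum.cong refl)
    fix \<pi> assume \<pi>: "\<pi> \<in> perms m"
    have "(\<Sum>\<sigma>\<in>perms k. \<Sum>\<rho>\<in>Qkm k m. \<Sum>\<tau>\<in>Qkm k m. (\<Prod>i<m. ?BD \<sigma> \<rho> \<tau> i (\<pi> i)))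
       = (\<Sum>\<sigma>\<in>perms k. \<Sum>\<tau>\<in>Qkm k m. \<Sum>\<rho>\<in>Qkm k m. (\<Prod>i<m. ?BD \<sigma> \<rho> \<tau> i (\<pi> i)))"
      by (rule sum.cong[OF refl], rule sum.swap)
    also have "\<dots> = (\<Sum>\<sigma>\<in>perms k. \<Sum>\<tau>\<in>Qkm k m. placed_product m A X \<gamma> \<delta> \<pi> \<sigma> \<tau>)"
      by (intro sum.cong refl) (rule sum_Qkm_prod_blockdsum[OF \<pi>])
    also have "\<dots> = mixed_product_sum k m A X \<gamma> \<delta> \<pi>" by (rule sum_perms_Qkm_placed_product[OF \<pi>])
    finally show "(\<Sum>\<sigma>\<in>perms k. \<Sum>\<rho>\<in>Qkm k m. \<Sum>\<tau>\<in>Qkm k m. cnj (chi \<pi>) * (\<Prod>i<m. ?BD \<sigma> \<rho> \<tau> i (\<pi> i)))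
       = cnj (chi \<pi>) * mixed_product_sum k m A X \<gamma> \<delta> \<pi>" by (simp add: sum_distrib_left[symmetric])
  qed
  finally show ?thesis .
qed

lemma DkKchi_eq_congr_miximm:
  assumes "irreducible_character m chi" "D \<subseteq> Gam m n" "\<alpha> \<in> D" "\<beta> \<in> D" "k \<le> m"
    and "\<forall>\<alpha>\<in>D. onb m n chi D \<alpha> = (\<lambda>x. \<Sum>\<gamma>\<in>D. B \<gamma> \<alpha> * estar m n chi \<gamma> x)"
  shows "DkKchi m n chi D k A X \<alpha> \<beta>
    = chi id / of_nat (fact (m - k)) * congr D B (miximm m (cnjchar chi) k A X) \<alpha> \<beta>"
proof -
  define S where "S \<gamma> \<delta> = (\<Sum>\<pi>\<in>perms m. cnj (chi \<pi>) * mixed_product_sum k m A X \<gamma> \<delta> \<pi>)" for \<gamma> \<delta>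
  have "chi id / of_nat (fact (m - k)) * congr D B (miximm m (cnjchar chi) k A X) \<alpha> \<beta>
      = (\<Sum>\<delta>\<in>D. \<Sum>\<gamma>\<in>D. chi id / fact (m - k) * (cnj (B \<delta> \<alpha>) * (fact (m - k) / fact m * S \<gamma> \<delta>) * B \<gamma> \<beta>))"
    unfolding congr_def miximm_eq_mixed_product_sum[OF assms(5)] S_def by (simp add: sum_distrib_left)
  also have "\<dots> = (\<Sum>\<gamma>\<in>D. \<Sum>\<delta>\<in>D. B \<gamma> \<beta> * cnj (B \<delta> \<alpha>) * Kchi_coeff m chi * S \<gamma> \<delta>)"
    by (subst sum.swap) (intro sum.cong refl, simp add: Kchi_coeff_def field_simps)
  finally show ?thesis
    unfolding DkKchi_eq_sum[OF assms(1-4,6)] S_def by simp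
qed

lemma DkKchi_eq_sum_blockdsum:
  assumes "irreducible_character m chi" "D \<subseteq> Gam m n" "\<alpha> \<in> D" "\<beta> \<in> D"
    and "\<forall>\<alpha>\<in>D. onb m n chi D \<alpha> = (\<lambda>x. \<Sum>\<gamma>\<in>D. B \<gamma> \<alpha> * estar m n chi \<gamma> x)"
  shows "DkKchi m n chi D k A X \<alpha> \<beta> = chi id / of_nat (fact m) *
    (\<Sum>\<gamma>\<in>D. \<Sum>\<delta>\<in>D. B \<gamma> \<beta> * cnj (B \<delta> \<alpha>) *
       (\<Sum>\<sigma>\<in>perms k. \<Sum>\<rho>\<in>Qkm k m. \<Sum>\<tau>\<in>Qkm k m.
          imm m (cnjchar chi)
            (blockdsum m (subsq (Xst X \<delta> \<gamma> \<sigma> \<tau>) \<rho> \<tau>) (cominor m (submat A \<delta> \<gamma>) \<rho> \<tau>) \<rho> \<tau>)))"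
  unfolding sum_blockdsum_imm_eq DkKchi_eq_sum[OF assms]
  by (simp add: sum_distrib_left Kchi_coeff_def ac_simps)

theorem mainTheorem7:
  fixes m n k :: nat
    and chi :: "(nat \<Rightarrow> nat) \<Rightarrow> complex"
    and D :: "nat list set"
    and B :: "nat list \<Rightarrow> nat list \<Rightarrow> complex"
    and A :: "nat \<Rightarrow> nat \<Rightarrow> complex"
    and X :: "nat \<Rightarrow> nat \<Rightarrow> nat \<Rightarrow> complex"
  assumes "1 \<le> m" and "1 \<le> k" and "k \<le> m"
    and "irreducible_character m chi"
    and "Deltabar m n chi \<subseteq> D" and "D \<subseteq> Omega m n chi"
    and "estar_basis m n chi D"
    and "\<forall>\<alpha>\<in>D. onb m n chi D \<alpha> = (\<lambda>x. \<Sum>\<gamma>\<in>D. B \<gamma> \<alpha> * estar m n chi \<gamma> x)"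
  shows "\<forall>\<alpha>\<in>D. \<forall>\<beta>\<in>D.
     DkKchi m n chi D k A X \<alpha> \<beta>
       = chi id / of_nat (fact (m - k)) * congr D B (miximm m (cnjchar chi) k A X) \<alpha> \<beta>
   \<and> DkKchi m n chi D k A X \<alpha> \<beta>
       = chi id / of_nat (fact m) *
         (\<Sum>\<gamma>\<in>D. \<Sum>\<delta>\<in>D. B \<gamma> \<beta> * cnj (B \<delta> \<alpha>) *
            (\<Sum>\<sigma>\<in>perms k. \<Sum>\<rho>\<in>Qkm k m. \<Sum>\<tau>\<in>Qkm k m.
               imm m (cnjchar chi)
                 (blockdsum m (subsq (Xst X \<delta> \<gamma> \<sigma> \<tau>) \<rho> \<tau>) (cominor m (submat A \<delta> \<gamma>) \<rho> \<tau>) \<rho> \<tau>)))"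
proof (intro ballI conjI)
  fix \<alpha> \<beta> assume \<alpha>\<beta>: "\<alpha> \<in> D" "\<beta> \<in> D"
  have "D \<subseteq> Gam m n" using assms(6) by (auto simp: Omega_def)
  note setting = assms(4) this \<alpha>\<beta>
  show "DkKchi m n chi D k A X \<alpha> \<beta>
      = chi id / of_nat (fact (m - k)) * congr D B (miximm m (cnjchar chi) k A X) \<alpha> \<beta>"
    by (rule DkKchi_eq_congr_miximm[OF setting assms(3,8)])
  show "DkKchi m n chi D k A X \<alpha> \<beta> = chi id / of_nat (fact m) *
      (\<Sum>\<gamma>\<in>D. \<Sum>\<delta>\<in>D. B \<gamma> \<beta> * cnj (B \<delta> \<alpha>) *
         (\<Sum>\<sigma>\<in>perms k. \<Sum>\<rho>\<in>Qkm k m. \<Sum>\<tau>\<in>Qkm k m.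
            imm m (cnjchar chi)
              (blockdsum m (subsq (Xst X \<delta> \<gamma> \<sigma> \<tau>) \<rho> \<tau>) (cominor m (submat A \<delta> \<gamma>) \<rho> \<tau>) \<rho> \<tau>)))"
    by (rule DkKchi_eq_sum_blockdsum[OF setting assms(8)])
qed

end
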